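(* Assume the setup of the context, with $d_R\ge 2$, a glue code $H_G$ compatible with the memory via pasting matrices $S\neq 0$, $T$, and $d$ the memory distance. (A) Suppose the glue code is finely devised for $\Sigma$, and consider the measurement-sticker deformed code. Then: (i) $\{hP^{\mathrm T}: h\in\mathrm{rs}H^{M\text{-}M}_X\}=\mathrm{rs}H_X$, where $hP^{\mathrm T}$ denotes the restriction of $h$ to the block $u_0$; (ii) for every $h\in\mathrm{rs}H_Z$, the vector equal to $h$ on $u_0$ and zero elsewhere lies in $\mathrm{rs}H^{M\text{-}M}_Z$; (iii) for every $x\in\mathrm{rs}J_X$ with $xJ_{Z,A}^{\mathrm T}=0$ there exists $x'\in\mathrm{rs}J^{M\text{-}M}_X$ whose restriction to $u_0$ equals $x$; (iv) for every $z\in\mathrm{rs}J_Z$, the vector equal to $z$ on $u_0$ and zero elsewhere lies in $\mathrm{rs}J^{M\text{-}M}_Z+\mathrm{rs}H^{M\text{-}M}_Z$; (v) for every $z\in\mathrm{rs}J_{Z,A}$, the vector equal to $z$ on $u_0$ and zero elsewhere lies in $\mathrm{rs}H^{M\text{-}M}_Z$; (vi) the distance of the measurement-sticker deformed code is at least $\min\{d/|S|,d_R\}$. (B) Suppose the glue code is coarsely devised for $\Sigma$, and consider the branch-sticker deformed code. Then (i) and (ii) hold with $H^{M\text{-}B}_X,H^{M\text{-}B}_Z$ in place of $H^{M\text{-}M}_X,H^{M\text{-}M}_Z$, and moreover: (iii') for every $x\in\mathrm{rs}J_X$ there exists $x'\in\mathrm{rs}J^{M\text{-}B}_X$ whose restriction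 to $u_0$ equals $x$; (iv') for every $z\in\mathrm{rs}J_Z$, the vector equal to $z$ on $u_0$ and zero elsewhere lies in $\mathrm{rs}J^{M\text{-}B}_Z$; (v') for every $z\in\mathrm{rs}J_{Z,A}$ there exists $g\in\mathrm{rs}H^{M\text{-}B}_Z$ such that (the vector equal to $z$ on $u_0$ and zero elsewhere) $+\,g$ is supported entirely in the open-boundary block $u_{d_R-1}$; (vi') the distance of the branch-sticker deformed code is at least $d/|S|$.
   Context: All vectors are row vectors over $\mathbb F_2$. For a matrix $A$, $\mathrm{rs}A$ is its row space and $\ker A=\{x: Ax^{\mathrm T}=0\}$; for a set $V$ of row vectors and a matrix $M$, $VM=\{vM:v\in V\}$. $|x|$ is the Hamming weight and $E_m$ the $m\times m$ identity. The memory is a CSS subsystem code specified by $H_X\in\mathbb F_2^{r_X\times n}$, $H_Z\in\mathbb F_2^{r_Z\times n}$, $J_X,J_Z\in\mathbb F_2^{k\times n}$, $F_X,F_Z\in\mathbb F_2^{k_g\times n}$ satisfying $\ker H_X=\mathrm{rs}H_Z\oplus\mathrm{rs}J_Z\oplus\mathrm{rs}F_Z$, $\ker H_Z=\mathrm{rs}H_X\oplus\mathrm{rs}J_X\oplus\mathrm{rs}F_X$, $J_XJ_Z^{\mathrm T}=E_k$, $F_XF_Z^{\mathrm T}=E_{k_g}$. For matrices $H,J$ with the same number of columns, $d(H,J)=\min\{|e|: e\in\ker H,\ Je^{\mathrm T}\neq0\}$; the memory distance is $d=\min\{d(H_X,J_X),d(H_Z,J_Z)\}$, and the distance of a deformed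 code with matrices $H^{dc}_X,H^{dc}_Z,J^{dc}_X,J^{dc}_Z$ is $\min\{d(H^{dc}_X,J^{dc}_X),d(H^{dc}_Z,J^{dc}_Z)\}$. For $S\in\mathbb F_2^{n_G\times n}$, $|S|=\max_{x\neq0}|xS|/|x|$. Let $v_1,\dots,v_q\in\mathrm{rs}J_Z$ be linearly independent (representing the operator set $\Sigma$), $J_{Z,A}$ the matrix with rows $v_1,\dots,v_q$; extend to a basis $v_1,\dots,v_k$ of $\mathrm{rs}J_Z$ and let $J_{Z,C}$ have rows $v_{q+1},\dots,v_k$. Let $\bar J_Z$ be the invertible $k\times k$ matrix with $\binom{J_{Z,A}}{J_{Z,C}}=\bar J_ZJ_Z$ and define $J_{X,A}\in\mathbb F_2^{q\times n}$, $J_{X,C}\in\mathbb F_2^{(k-q)\times n}$ by $\binom{J_{X,A}}{J_{X,C}}=(\bar J_Z^{-1})^{\mathrm T}J_X$. A glue code is a binary linear code with check matrix $H_G\in\mathbb F_2^{r_G\times n_G}$; it is compatible via pasting matrices $S\in\mathbb F_2^{n_G\times n}$, $T\in\mathbb F_2^{r_X\times r_G}$ if $H_XS^{\mathrm T}=TH_G$; it is coarsely devised for $\Sigma$ if $\mathrm{span}(v_1,\dots,v_q)\subseteq(\ker H_G)S$, and finely devised for $\Sigma$ if there exist $u_1,u_2,\dots\in\mathrm{rs}H_Z\oplus\mathrm{rs}F_Z$ with $\mathrm{span}(v_1,\dots,v_q,u_1,u_2,\dots)=(\ker H_G)S$. When finely devised, fix $\gamma\in\mathbb F_2^{(k-q)\times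 r_G}$ with $J_{X,C}S^{\mathrm T}=\gamma H_G$ (such $\gamma$ exists). Measurement-sticker deformed code: coordinates are split into blocks $u_0\in\mathbb F_2^n$, $u_1,\dots,u_{d_R-1}\in\mathbb F_2^{n_G}$, $w_1,\dots,w_{d_R}\in\mathbb F_2^{r_G}$. $H^{M\text{-}M}_X$ has row-block $0$ equal to $H_X$ on $u_0$ and $T$ on $w_1$, and for $1\le j\le d_R-1$ row-block $j$ equal to $H_G$ on $u_j$, $E_{r_G}$ on $w_j$ and $E_{r_G}$ on $w_{j+1}$ (zero elsewhere). $H^{M\text{-}M}_Z$ has row-block $0$ equal to $H_Z$ on $u_0$, and for $1\le i\le d_R$ row-block $i$ equal to $S$ on $u_0$ (only if $i=1$), $E_{n_G}$ on $u_{i-1}$ (only if $i\ge2$), $E_{n_G}$ on $u_i$ (only if $i\le d_R-1$), and $H_G^{\mathrm T}$ on $w_i$. $J^{M\text{-}M}_X$ equals $J_{X,C}$ on $u_0$, $J_{X,C}S^{\mathrm T}$ on each of $u_1,\dots,u_{d_R-1}$, $0$ on $w_1,\dots,w_{d_R-1}$ and $\gamma$ on $w_{d_R}$; $J^{M\text{-}M}_Z$ equals $J_{Z,C}$ on $u_0$ and $0$ elsewhere. Branch-sticker deformed code: blocks $u_0\in\mathbb F_2^n$, $u_1,\dots,u_{d_R-1}\in\mathbb F_2^{n_G}$, $w_1,\dots,w_{d_R-1}\in\mathbb F_2^{r_G}$. $H^{M\text{-}B}_X$ has row-block $0$ equal to $H_X$ on $u_0$ and $T$ on $w_1$, and for $1\le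 j\le d_R-1$ row-block $j$ equal to $H_G$ on $u_j$, $E_{r_G}$ on $w_j$ and $E_{r_G}$ on $w_{j+1}$ (the latter only if $j\le d_R-2$). $H^{M\text{-}B}_Z$ has row-block $0$ equal to $H_Z$ on $u_0$, and for $1\le i\le d_R-1$ row-block $i$ equal to $S$ on $u_0$ (only if $i=1$), $E_{n_G}$ on $u_{i-1}$ (only if $i\ge 2$), $E_{n_G}$ on $u_i$, and $H_G^{\mathrm T}$ on $w_i$. With $J'_X=\binom{J_{X,A}}{J_{X,C}}$, $J'_Z=\binom{J_{Z,A}}{J_{Z,C}}$: $J^{M\text{-}B}_X$ equals $J'_X$ on $u_0$, $J'_XS^{\mathrm T}$ on each $u_j$ ($1\le j\le d_R-1$) and $0$ on all $w_j$; $J^{M\text{-}B}_Z$ equals $J'_Z$ on $u_0$ and $0$ elsewhere. The block $u_{d_R-1}$ is called the open boundary. *)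

theory Defs
  imports "Jordan_Normal_Form.Matrix" "HOL-Library.Z2" "HOL-Library.Extended_Real"
begin

text \<open>Binary linear algebra.  Row vectors over F2 are represented as bit vec of the
  appropriate dimension; a row vector x times a matrix M (the product xM) is
  transpose_mat M applied to x.\<close>

definition wt :: "bit vec \<Rightarrow> nat" where
  "wt v = card {i. i < dim_vec v \<and> v $ i \<noteq> 0}"

definition rs :: "bit mat \<Rightarrow> bit vec set" where
  "rs A = {transpose_mat A *\<^sub>v c | c. c \<in> carrier_vec (dim_row A)}"

definition ker :: "bit mat \<Rightarrow> bit vec set" where
  "ker A = {x \<in> carrier_vec (dim_col A). A *\<^sub>v x = 0\<^sub>v (dim_row A)}"

definition set_mult :: "bit vec set \<Rightarrow> bit mat \<Rightarrow> bit vec set" where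
  "set_mult V M = {transpose_mat M *\<^sub>v v | v. v \<in> V}"

definition set_plus :: "bit vec set \<Rightarrow> bit vec set \<Rightarrow> bit vec set" where
  "set_plus U V = {u + v | u v. u \<in> U \<and> v \<in> V}"

definition dsum3 :: "bit vec set \<Rightarrow> bit vec set \<Rightarrow> bit vec set \<Rightarrow> bit vec set \<Rightarrow> bool" where
  "dsum3 X U V W \<longleftrightarrow> X = {u + v + w | u v w. u \<in> U \<and> v \<in> V \<and> w \<in> W} \<and>
     (\<forall>u\<in>U. \<forall>v\<in>V. \<forall>w\<in>W. u + v + w = 0\<^sub>v (dim_vec u) \<longrightarrow>
        u = 0\<^sub>v (dim_vec u) \<and> v = 0\<^sub>v (dim_vec v) \<and> w = 0\<^sub>v (dim_vec w))"

text \<open>d(H,J) = min{|e| : e in ker H, J e^T \<noteq> 0}; the minimum of the empty set is \<infinity>\<close>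
definition cdist :: "bit mat \<Rightarrow> bit mat \<Rightarrow> enat" where
  "cdist H J = Inf {enat (wt e) | e. e \<in> ker H \<and> J *\<^sub>v e \<noteq> 0\<^sub>v (dim_row J)}"

definition mat_norm :: "bit mat \<Rightarrow> real" where
  "mat_norm S = Max {real (wt (transpose_mat S *\<^sub>v x)) / real (wt x) | x.
       x \<in> carrier_vec (dim_row S) \<and> x \<noteq> 0\<^sub>v (dim_row S)}"

definition restr :: "nat \<Rightarrow> bit vec \<Rightarrow> bit vec" where
  "restr n h = vec n (\<lambda>i. h $ i)"

definition ext0 :: "nat \<Rightarrow> bit vec \<Rightarrow> bit vec" where
  "ext0 N h = vec N (\<lambda>i. if i < dim_vec h then h $ i else 0)"

text \<open>Block-matrix assembly: an R x C matrix, zero except for the listed blocks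
  (row offset, column offset, block), entries of overlapping blocks being added.\<close>
definition place :: "nat \<Rightarrow> nat \<Rightarrow> (nat \<times> nat \<times> bit mat) list \<Rightarrow> bit mat" where
  "place R C bs = mat R C (\<lambda>(i, j). sum_list (map (\<lambda>(r0, c0, M).
      if r0 \<le> i \<and> i < r0 + dim_row M \<and> c0 \<le> j \<and> j < c0 + dim_col M
      then M $$ (i - r0, j - c0) else 0) bs))"

text \<open>Column layout: u_0 (n coordinates), then u_1 .. u_{dR-1} (nG each), then
  w_1, w_2, ... (rG each).\<close>
definition uoff :: "nat \<Rightarrow> nat \<Rightarrow> nat \<Rightarrow> nat" where
  "uoff n nG j = n + (j - 1) * nG"

definition woff :: "nat \<Rightarrow> nat \<Rightarrow> nat \<Rightarrow> nat \<Rightarrow> nat \<Rightarrow> nat" where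
  "woff n nG dR rG j = n + (dR - 1) * nG + (j - 1) * rG"

definition NMM :: "nat \<Rightarrow> nat \<Rightarrow> nat \<Rightarrow> nat \<Rightarrow> nat" where
  "NMM n nG rG dR = n + (dR - 1) * nG + dR * rG"

definition HX_MM :: "nat \<Rightarrow> bit mat \<Rightarrow> bit mat \<Rightarrow> bit mat \<Rightarrow> bit mat" where
  "HX_MM dR HX HG T =
    (let n = dim_col HX; rX = dim_row HX; rG = dim_row HG; nG = dim_col HG in
     place (rX + (dR - 1) * rG) (NMM n nG rG dR)
      ([(0, 0, HX), (0, woff n nG dR rG 1, T)] @
       concat (map (\<lambda>j. let r0 = rX + (j - 1) * rG in
          [(r0, uoff n nG j, HG), (r0, woff n nG dR rG j, 1\<^sub>m rG),
           (r0, woff n nG dR rG (j + 1), 1\<^sub>m rG)]) [1..<dR])))"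

definition HZ_MM :: "nat \<Rightarrow> bit mat \<Rightarrow> bit mat \<Rightarrow> bit mat \<Rightarrow> bit mat" where
  "HZ_MM dR HZ HG S =
    (let n = dim_col HZ; rZ = dim_row HZ; rG = dim_row HG; nG = dim_col HG in
     place (rZ + dR * nG) (NMM n nG rG dR)
      ([(0, 0, HZ)] @
       concat (map (\<lambda>i. let r0 = rZ + (i - 1) * nG in
          (if i = 1 then [(r0, 0, S)] else []) @
          (if 2 \<le> i then [(r0, uoff n nG (i - 1), 1\<^sub>m nG)] else []) @
          (if i \<le> dR - 1 then [(r0, uoff n nG i, 1\<^sub>m nG)] else []) @
          [(r0, woff n nG dR rG i, transpose_mat HG)]) [1..<dR + 1])))"

definition JX_MM :: "nat \<Rightarrow> bit mat \<Rightarrow> bit mat \<Rightarrow> bit mat \<Rightarrow> bit mat \<Rightarrow> bit mat" where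
  "JX_MM dR JXC HG S \<gamma> =
    (let n = dim_col JXC; rG = dim_row HG; nG = dim_col HG in
     place (dim_row JXC) (NMM n nG rG dR)
      ([(0, 0, JXC)] @
       map (\<lambda>j. (0, uoff n nG j, JXC * transpose_mat S)) [1..<dR] @
       [(0, woff n nG dR rG dR, \<gamma>)]))"

definition JZ_MM :: "nat \<Rightarrow> bit mat \<Rightarrow> bit mat \<Rightarrow> bit mat" where
  "JZ_MM dR JZC HG =
    (let n = dim_col JZC; rG = dim_row HG; nG = dim_col HG in
     place (dim_row JZC) (NMM n nG rG dR) [(0, 0, JZC)])"

definition NMB :: "nat \<Rightarrow> nat \<Rightarrow> nat \<Rightarrow> nat \<Rightarrow> nat" where
  "NMB n nG rG dR = n + (dR - 1) * nG + (dR - 1) * rG"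

definition HX_MB :: "nat \<Rightarrow> bit mat \<Rightarrow> bit mat \<Rightarrow> bit mat \<Rightarrow> bit mat" where
  "HX_MB dR HX HG T =
    (let n = dim_col HX; rX = dim_row HX; rG = dim_row HG; nG = dim_col HG in
     place (rX + (dR - 1) * rG) (NMB n nG rG dR)
      ([(0, 0, HX), (0, woff n nG dR rG 1, T)] @
       concat (map (\<lambda>j. let r0 = rX + (j - 1) * rG in
          [(r0, uoff n nG j, HG), (r0, woff n nG dR rG j, 1\<^sub>m rG)] @
          (if j \<le> dR - 2 then [(r0, woff n nG dR rG (j + 1), 1\<^sub>m rG)] else []))
          [1..<dR])))"

definition HZ_MB :: "nat \<Rightarrow> bit mat \<Rightarrow> bit mat \<Rightarrow> bit mat \<Rightarrow> bit mat" where
  "HZ_MB dR HZ HG S =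
    (let n = dim_col HZ; rZ = dim_row HZ; rG = dim_row HG; nG = dim_col HG in
     place (rZ + (dR - 1) * nG) (NMB n nG rG dR)
      ([(0, 0, HZ)] @
       concat (map (\<lambda>i. let r0 = rZ + (i - 1) * nG in
          (if i = 1 then [(r0, 0, S)] else []) @
          (if 2 \<le> i then [(r0, uoff n nG (i - 1), 1\<^sub>m nG)] else []) @
          [(r0, uoff n nG i, 1\<^sub>m nG), (r0, woff n nG dR rG i, transpose_mat HG)])
          [1..<dR])))"

definition JX_MB :: "nat \<Rightarrow> bit mat \<Rightarrow> bit mat \<Rightarrow> bit mat \<Rightarrow> bit mat" where
  "JX_MB dR JX' HG S =
    (let n = dim_col JX'; rG = dim_row HG; nG = dim_col HG in
     place (dim_row JX') (NMB n nG rG dR)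
      ([(0, 0, JX')] @ map (\<lambda>j. (0, uoff n nG j, JX' * transpose_mat S)) [1..<dR]))"

definition JZ_MB :: "nat \<Rightarrow> bit mat \<Rightarrow> bit mat \<Rightarrow> bit mat" where
  "JZ_MB dR JZ' HG =
    (let n = dim_col JZ'; rG = dim_row HG; nG = dim_col HG in
     place (dim_row JZ') (NMB n nG rG dR) [(0, 0, JZ')])"

end

(*
  A logical Z operator in rs J\<^sub>Z\<^sub>,\<^sub>A \<subseteq> (ker H\<^sub>G) S,
  say S\<^sup>T v with H\<^sub>G v = 0, is the product of the glue Z-checks fed v in every glue row block: the
  identity blocks between consecutive u\<^sub>j cancel in pairs, leaving S\<^sup>T v on u\<^sub>0 (and, for the branch
  sticker, a copy of v on the open boundary).

  For the distance, an undetected logical X error e of a deformed code satisfies H\<^sub>G u\<^sub>j = w\<^sub>j + w\<^sub>j\<^sub>+\<^sub>1.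
  If some w\<^sub>m vanishes (for the branch sticker w\<^bsub>d\<^sub>R\<^esub> does not even exist), telescoping and
  H\<^sub>X S\<^sup>T = T H\<^sub>G show that u\<^sub>0 + S\<^sup>T (u\<^sub>1 + \<dots> + u\<^bsub>m-1\<^esub>) is a logical X error of the memory, of
  weight at most |S| wt e; otherwise all d\<^sub>R blocks w\<^sub>j are nonzero and wt e \<ge> d\<^sub>R. A logical Z
  error of a deformed code restricts to one of the memory on u\<^sub>0.
*)

theory Submission
  imports Defs
begin

section \<open>Vectors over \<open>\<bbbF>\<^sub>2\<close> and their weights\<close>

text \<open>The simplifier would otherwise rewrite sums of bits into cardinalities.\<close>

declare add_bit_eq_xor [simp del] mult_bit_eq_and [simp del]

definition subvec :: "nat \<Rightarrow> nat \<Rightarrow> 'a vec \<Rightarrow> 'a vec" where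
  "subvec c0 m x = vec m (\<lambda>i. x $ (c0 + i))"

lemma subvec_carrier [simp]: "subvec c0 m x \<in> carrier_vec m"
  and dim_subvec [simp]: "dim_vec (subvec c0 m x) = m"
  and index_subvec [simp]: "i < m \<Longrightarrow> subvec c0 m x $ i = x $ (c0 + i)"
  by (auto simp: subvec_def)

lemma restr_eq_subvec: "restr n x = subvec 0 n x"
  by (simp add: restr_def subvec_def)

lemma restr_carrier [simp]: "restr n x \<in> carrier_vec n"
  by (simp add: restr_def)

lemma index_mult_mat_vec_sum:
  "A \<in> carrier_mat r c \<Longrightarrow> x \<in> carrier_vec c \<Longrightarrow> i < r \<Longrightarrow>
    (A *\<^sub>v x) $ i = (\<Sum>j<c. A $$ (i, j) * x $ j)"
  by (auto simp: scalar_prod_def row_def lessThan_atLeast0 intro!: sum.cong)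

lemma mult_mat_vec_zero [simp]:
  "A \<in> carrier_mat r c \<Longrightarrow> A *\<^sub>v 0\<^sub>v c = (0\<^sub>v r :: 'a :: semiring_0 vec)"
  by (intro eq_vecI) (auto simp: scalar_prod_def)

lemma mult_mat_vec_sum_vec:
  assumes "M \<in> carrier_mat a b" and "\<And>j. j \<in> J \<Longrightarrow> E j \<in> carrier_vec b" and "r < a"
  shows "(M *\<^sub>v vec b (\<lambda>t. \<Sum>j\<in>J. E j $ t)) $ r = (\<Sum>j\<in>J. (M *\<^sub>v E j) $ r)"
proof -
  have "(M *\<^sub>v vec b (\<lambda>t. \<Sum>j\<in>J. E j $ t)) $ r = (\<Sum>t<b. M $$ (r, t) * (\<Sum>j\<in>J. E j $ t))"
    using assms by (subst index_mult_mat_vec_sum[where r = a and c = b]) auto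
  also have "\<dots> = (\<Sum>j\<in>J. \<Sum>t<b. M $$ (r, t) * E j $ t)"
    by (simp add: sum_distrib_left sum.swap[of _ J])
  also have "\<dots> = (\<Sum>j\<in>J. (M *\<^sub>v E j) $ r)"
    using assms by (intro sum.cong refl index_mult_mat_vec_sum[symmetric]) auto
  finally show ?thesis .
qed

lemma bit_add_self [simp]: "(x :: bit) + x = 0"
  by (cases x) simp_all

lemma bit_add_eq_0_iff: "(x :: bit) + y = 0 \<longleftrightarrow> x = y"
  by (cases x; cases y) (simp_all add: add_bit_eq_xor)

lemma telescope_bit:
  fixes f :: "nat \<Rightarrow> bit"
  assumes "a \<le> b"
  shows "(\<Sum>j\<in>{a..<b}. f j + f (Suc j)) = f a + f b"
  using assms
proof (induction b)
  case (Suc b)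
  show ?case
  proof (cases "a = Suc b")
    case False
    then have "(\<Sum>j\<in>{a..<Suc b}. f j + f (Suc j)) = f a + f b + (f b + f (Suc b))"
      using Suc by simp
    also have "\<dots> = f a + f (Suc b)"
      by (metis add.assoc add_0_left bit_add_self)
    finally show ?thesis .
  qed simp
qed simp

definition supp_vec :: "'a :: zero vec \<Rightarrow> nat set" where
  "supp_vec v = {i. i < dim_vec v \<and> v $ i \<noteq> 0}"

lemma wt_eq_card_supp_vec: "wt v = card (supp_vec v)"
  by (simp add: wt_def supp_vec_def)

lemma finite_supp_vec [simp]: "finite (supp_vec v)"
  by (simp add: supp_vec_def)

lemma wt_zero_vec [simp]: "wt (0\<^sub>v n) = 0"
  by (simp add: wt_def)

lemma wt_add_le:
  assumes "dim_vec u = dim_vec v"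
  shows "wt (u + v) \<le> wt u + wt v"
proof -
  have "supp_vec (u + v) \<subseteq> supp_vec u \<union> supp_vec v"
    using assms by (auto simp: supp_vec_def)
  then have "card (supp_vec (u + v)) \<le> card (supp_vec u \<union> supp_vec v)"
    by (intro card_mono) auto
  also have "\<dots> \<le> card (supp_vec u) + card (supp_vec v)"
    by (rule card_Un_le)
  finally show ?thesis
    by (simp add: wt_eq_card_supp_vec)
qed

lemma wt_pos:
  assumes "v \<in> carrier_vec n" and "v \<noteq> 0\<^sub>v n"
  shows "1 \<le> wt v"
proof -
  obtain i where "i < n" "v $ i \<noteq> 0"
    using assms by (metis carrier_vecD eq_vecI index_zero_vec)
  then have "supp_vec v \<noteq> {}"
    using assms by (auto simp: supp_vec_def)
  then show ?thesis
    by (simp add: wt_eq_card_supp_vec Suc_le_eq card_gt_0_iff)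
qed

lemma wt_vec_sum_le:
  assumes "finite J" and "\<And>j. j \<in> J \<Longrightarrow> E j \<in> carrier_vec m"
  shows "wt (vec m (\<lambda>t. \<Sum>j\<in>J. E j $ t)) \<le> (\<Sum>j\<in>J. wt (E j))"
proof -
  have "supp_vec (vec m (\<lambda>t. \<Sum>j\<in>J. E j $ t)) \<subseteq> (\<Union>j\<in>J. supp_vec (E j))"
  proof
    fix t assume "t \<in> supp_vec (vec m (\<lambda>t. \<Sum>j\<in>J. E j $ t))"
    then have "t < m" and "(\<Sum>j\<in>J. E j $ t) \<noteq> 0"
      by (auto simp: supp_vec_def)
    then obtain j where "j \<in> J" "E j $ t \<noteq> 0"
      by (meson sum.neutral)
    with \<open>t < m\<close> carrier_vecD[OF assms(2)[OF \<open>j \<in> J\<close>]] show "t \<in> (\<Union>j\<in>J. supp_vec (E j))"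
      by (auto simp: supp_vec_def)
  qed
  then have "card (supp_vec (vec m (\<lambda>t. \<Sum>j\<in>J. E j $ t))) \<le> card (\<Union>j\<in>J. supp_vec (E j))"
    using assms(1) by (intro card_mono) auto
  also have "\<dots> \<le> (\<Sum>j\<in>J. card (supp_vec (E j)))"
    using assms(1) by (rule card_UN_le)
  finally show ?thesis
    by (simp add: wt_eq_card_supp_vec)
qed

lemma wt_subvec:
  assumes "c + m \<le> dim_vec e"
  shows "wt (subvec c m e) = card (supp_vec e \<inter> {c..<c + m})"
proof -
  have "supp_vec e \<inter> {c..<c + m} = (\<lambda>i. c + i) ` supp_vec (subvec c m e)"
  proof
    show "supp_vec e \<inter> {c..<c + m} \<subseteq> (\<lambda>i. c + i) ` supp_vec (subvec c m e)"
    proof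
      fix x assume x: "x \<in> supp_vec e \<inter> {c..<c + m}"
      then have "x - c \<in> supp_vec (subvec c m e)" and "x = c + (x - c)"
        by (auto simp: supp_vec_def)
      then show "x \<in> (\<lambda>i. c + i) ` supp_vec (subvec c m e)"
        by blast
    qed
  qed (use assms in \<open>auto simp: supp_vec_def\<close>)
  then show ?thesis
    by (simp add: wt_eq_card_supp_vec card_image)
qed

lemma sum_wt_subvec_le:
  fixes J :: "'i :: linorder set"
  assumes "finite J" and fit: "\<And>j. j \<in> J \<Longrightarrow> c j + m j \<le> dim_vec e"
    and sorted: "\<And>j j'. j \<in> J \<Longrightarrow> j' \<in> J \<Longrightarrow> j < j' \<Longrightarrow> c j + m j \<le> c j'"
  shows "(\<Sum>j\<in>J. wt (subvec (c j) (m j) e)) \<le> wt e"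
proof -
  have disj: "{c j..<c j + m j} \<inter> {c j'..<c j' + m j'} = {}"
    if "j \<in> J" "j' \<in> J" "j \<noteq> j'" for j j'
  proof (cases "j < j'")
    case True
    then show ?thesis using that sorted[of j j'] by auto
  next
    case False
    then have "j' < j" using that by (simp add: linorder_neq_iff)
    then show ?thesis using that sorted[of j' j] by auto
  qed
  have "(\<Sum>j\<in>J. wt (subvec (c j) (m j) e)) = (\<Sum>j\<in>J. card (supp_vec e \<inter> {c j..<c j + m j}))"
    using fit by (intro sum.cong refl wt_subvec) auto
  also have "\<dots> = card (\<Union>j\<in>J. supp_vec e \<inter> {c j..<c j + m j})"
  proof (rule card_UN_disjoint[symmetric])
    show "\<forall>i\<in>J. \<forall>j\<in>J. i \<noteq> j \<longrightarrow>
        supp_vec e \<inter> {c i..<c i + m i} \<inter> (supp_vec e \<inter> {c j..<c j + m j}) = {}"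
      using disj by blast
  qed (use assms(1) in auto)
  also have "\<dots> \<le> card (supp_vec e)"
    by (intro card_mono) auto
  finally show ?thesis
    by (simp add: wt_eq_card_supp_vec)
qed

lemma finite_carrier_vec_bit: "finite (carrier_vec n :: bit vec set)"
proof -
  have "carrier_vec n \<subseteq> (\<lambda>f. vec n f) ` ({0..<n} \<rightarrow>\<^sub>E (UNIV :: bit set))"
  proof
    fix v :: "bit vec" assume "v \<in> carrier_vec n"
    then have "v = vec n (restrict (\<lambda>i. v $ i) {0..<n})"
      by (intro eq_vecI) simp_all
    moreover have "restrict (\<lambda>i. v $ i) {0..<n} \<in> {0..<n} \<rightarrow>\<^sub>E (UNIV :: bit set)"
      by simp
    ultimately show "v \<in> (\<lambda>f. vec n f) ` ({0..<n} \<rightarrow>\<^sub>E UNIV)"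
      by (rule image_eqI)
  qed
  moreover have "finite (UNIV :: bit set)"
    by (metis (full_types) bit.exhaust finite.simps finite_subset insertI1 insert_commute subsetI)
  ultimately show ?thesis
    by (meson finite_PiE finite_atLeastLessThan finite_imageI finite_subset)
qed

section \<open>Block matrices\<close>

definition transpose_block :: "nat \<times> nat \<times> 'a mat \<Rightarrow> nat \<times> nat \<times> 'a mat" where
  "transpose_block = (\<lambda>(r0, c0, M). (c0, r0, transpose_mat M))"

definition blocks_fit :: "nat \<Rightarrow> nat \<Rightarrow> (nat \<times> nat \<times> 'a mat) list \<Rightarrow> bool" where
  "blocks_fit R C bs \<longleftrightarrow> (\<forall>(r0, c0, M) \<in> set bs. r0 + dim_row M \<le> R \<and> c0 + dim_col M \<le> C)"

definition block_contrib :: "nat \<Rightarrow> bit vec \<Rightarrow> nat \<times> nat \<times> bit mat \<Rightarrow> bit" where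
  "block_contrib i x = (\<lambda>(r0, c0, M).
     if r0 \<le> i \<and> i < r0 + dim_row M then (M *\<^sub>v subvec c0 (dim_col M) x) $ (i - r0) else 0)"

lemma block_contrib_in:
  "r0 \<le> i \<Longrightarrow> i < r0 + dim_row M \<Longrightarrow>
    block_contrib i x (r0, c0, M) = (M *\<^sub>v subvec c0 (dim_col M) x) $ (i - r0)"
  by (simp add: block_contrib_def)

lemma block_contrib_out:
  "\<not> (r0 \<le> i \<and> i < r0 + dim_row M) \<Longrightarrow> block_contrib i x (r0, c0, M) = 0"
  by (auto simp: block_contrib_def)

lemma blocks_fit_Cons [simp]:
  "blocks_fit R C ((r0, c0, M) # bs) \<longleftrightarrow>
    r0 + dim_row M \<le> R \<and> c0 + dim_col M \<le> C \<and> blocks_fit R C bs"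
  by (simp add: blocks_fit_def)

lemma blocks_fit_transpose:
  "blocks_fit R C bs \<Longrightarrow> blocks_fit C R (map transpose_block bs)"
  by (auto simp: blocks_fit_def transpose_block_def)

lemma place_carrier [simp]: "place R C bs \<in> carrier_mat R C"
  and dim_row_place: "dim_row (place R C bs) = R"
  and dim_col_place: "dim_col (place R C bs) = C"
  by (simp_all add: place_def)

lemma index_place:
  "i < R \<Longrightarrow> j < C \<Longrightarrow> place R C bs $$ (i, j) = (\<Sum>(r0, c0, M)\<leftarrow>bs.
     if r0 \<le> i \<and> i < r0 + dim_row M \<and> c0 \<le> j \<and> j < c0 + dim_col M then M $$ (i - r0, j - c0) else 0)"
  by (simp add: place_def)

lemma transpose_place:
  "transpose_mat (place R C bs) = place C R (map transpose_block bs)"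
proof (rule eq_matI)
  fix i j assume "i < dim_row (place C R (map transpose_block bs))"
    "j < dim_col (place C R (map transpose_block bs))"
  then have ij: "i < C" "j < R"
    by (auto simp: place_def)
  then have "transpose_mat (place R C bs) $$ (i, j) = place R C bs $$ (j, i)"
    by (simp add: place_def)
  also have "\<dots> = place C R (map transpose_block bs) $$ (i, j)"
    using ij by (auto simp: index_place transpose_block_def comp_def
        intro!: arg_cong[where f = sum_list] map_cong split: prod.splits)
  finally show "transpose_mat (place R C bs) $$ (i, j) = place C R (map transpose_block bs) $$ (i, j)" .
qed (auto simp: place_def)

lemma block_contrib_sum:
  fixes M :: "bit mat"
  assumes x: "x \<in> carrier_vec C" and fit: "c0 + dim_col M \<le> C"
  shows "(\<Sum>j<C. (if r0 \<le> i \<and> i < r0 + dim_row M \<and> c0 \<le> j \<and> j < c0 + dim_col M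
      then M $$ (i - r0, j - c0) else 0) * x $ j) = block_contrib i x (r0, c0, M)"
proof (cases "r0 \<le> i \<and> i < r0 + dim_row M")
  case True
  have "(\<Sum>j<C. (if r0 \<le> i \<and> i < r0 + dim_row M \<and> c0 \<le> j \<and> j < c0 + dim_col M
      then M $$ (i - r0, j - c0) else 0) * x $ j) =
      (\<Sum>j\<in>{c0..<c0 + dim_col M}. M $$ (i - r0, j - c0) * x $ j)"
    using True fit by (intro sum.mono_neutral_cong_right) auto
  also have "\<dots> = (\<Sum>j<dim_col M. M $$ (i - r0, j) * x $ (c0 + j))"
    using sum.shift_bounds_nat_ivl[of "\<lambda>j. M $$ (i - r0, j - c0) * x $ j" 0 c0 "dim_col M"]
    by (simp add: add.commute lessThan_atLeast0)
  also have "\<dots> = (M *\<^sub>v subvec c0 (dim_col M) x) $ (i - r0)"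
    using True by (subst index_mult_mat_vec_sum[of M "dim_row M" "dim_col M"]) auto
  finally show ?thesis
    using True by (simp only: block_contrib_in)
qed (auto simp: block_contrib_out)

lemma index_place_mult_vec:
  assumes "blocks_fit R C bs" and "x \<in> carrier_vec C" and "i < R"
  shows "(place R C bs *\<^sub>v x) $ i = (\<Sum>b\<leftarrow>bs. block_contrib i x b)"
proof -
  have "(place R C bs *\<^sub>v x) $ i = (\<Sum>j<C. place R C bs $$ (i, j) * x $ j)"
    using assms by (intro index_mult_mat_vec_sum) auto
  also have "\<dots> = (\<Sum>j<C. (\<Sum>(r0, c0, M)\<leftarrow>bs. if r0 \<le> i \<and> i < r0 + dim_row M \<and> c0 \<le> j \<and>
      j < c0 + dim_col M then M $$ (i - r0, j - c0) else 0) * x $ j)"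
    using assms(3) by (intro sum.cong) (auto simp: index_place)
  also have "\<dots> = (\<Sum>b\<leftarrow>bs. block_contrib i x b)"
    using assms(1)
  proof (induction bs)
    case (Cons b bs)
    obtain r0 c0 M where b: "b = (r0, c0, M)"
      by (cases b)
    show ?case
      using Cons block_contrib_sum[OF assms(2), of c0 M r0 i]
      by (simp add: b distrib_right sum.distrib)
  qed simp
  finally show ?thesis .
qed

lemma index_transpose_place_mult_vec:
  assumes "blocks_fit R C bs" and "c \<in> carrier_vec R" and "j < C"
  shows "(transpose_mat (place R C bs) *\<^sub>v c) $ j = (\<Sum>b\<leftarrow>bs. block_contrib j c (transpose_block b))"
  using index_place_mult_vec[OF blocks_fit_transpose[OF assms(1)] assms(2,3)]
  by (simp add: transpose_place comp_def)

lemma sum_list_map_eq_0: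
  "(\<And>b. b \<in> set bs \<Longrightarrow> f b = (0 :: 'a :: monoid_add)) \<Longrightarrow> (\<Sum>b\<leftarrow>bs. f b) = 0"
  by (induction bs) auto

lemma sum_list_concat_map_upt:
  "(\<Sum>b\<leftarrow>concat (map g [a..<c]). f b) = (\<Sum>j\<in>{a..<c}. \<Sum>b\<leftarrow>g j. f b)"
  for f :: "'b \<Rightarrow> 'a :: comm_monoid_add"
  by (induction c) (auto simp: sum_list_append)

lemma block_index_unique:
  fixes a m i j j' :: nat
  assumes "i < m" "1 \<le> j" "1 \<le> j'"
    and "a + (j' - 1) * m \<le> a + (j - 1) * m + i" "a + (j - 1) * m + i < a + (j' - 1) * m + m"
  shows "j' = j"
proof -
  obtain x y where xy: "j' = Suc x" "j = Suc y"
    using assms(2,3) by (metis Suc_le_D One_nat_def)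
  then have "x * m < (y + 1) * m" "y * m < (x + 1) * m"
    using assms(1,4,5) by simp_all
  then have "x < y + 1" "y < x + 1"
    by (metis mult_less_cancel2)+
  then show ?thesis
    using xy by simp
qed

lemma block_rows_le: "1 \<le> j \<Longrightarrow> j \<le> m \<Longrightarrow> (j - 1) * a + a \<le> m * a"
  for a :: nat
  using mult_le_mono1[of j m a] by (cases j) auto

lemma sum_shift_if_ge_2:
  "(\<Sum>i\<in>{1..<m + 1}. if 2 \<le> i then f (i - 1) else 0) = (\<Sum>i\<in>{1..<m}. f i)"
  for f :: "nat \<Rightarrow> 'a :: comm_monoid_add"
  by (induction m) auto

lemma sum_list_map_if_single:
  "(\<Sum>b\<leftarrow>(if P then [x] else []). f b) = (if P then f x else (0 :: 'a :: monoid_add))"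
  by simp

lemma index_place_mult_vec_head:
  assumes "blocks_fit R C ((0, 0, M) # bs)" and "x \<in> carrier_vec C" and "i < dim_row M"
    and "\<And>r0 c0 M'. (r0, c0, M') \<in> set bs \<Longrightarrow> dim_row M \<le> r0"
  shows "(place R C ((0, 0, M) # bs) *\<^sub>v x) $ i = (M *\<^sub>v subvec 0 (dim_col M) x) $ i"
proof -
  have "(\<Sum>b\<leftarrow>bs. block_contrib i x b) = 0"
    using assms(3,4) by (intro sum_list_map_eq_0) (force intro: block_contrib_out)
  then show ?thesis
    using assms by (simp add: index_place_mult_vec block_contrib_in)
qed

lemma place_mult_vec_zero_tail:
  assumes fit: "blocks_fit R C ((0, 0, M) # bs)" and x: "x \<in> carrier_vec C"
    and zero: "\<And>r0 c0 M'. (r0, c0, M') \<in> set bs \<Longrightarrow> subvec c0 (dim_col M') x = 0\<^sub>v (dim_col M')"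
  shows "place R C ((0, 0, M) # bs) *\<^sub>v x = ext0 R (M *\<^sub>v subvec 0 (dim_col M) x)"
proof (rule eq_vecI)
  fix i assume "i < dim_vec (ext0 R (M *\<^sub>v subvec 0 (dim_col M) x))"
  then have i: "i < R"
    by (simp add: ext0_def)
  have "(\<Sum>b\<leftarrow>bs. block_contrib i x b) = 0"
  proof (rule sum_list_map_eq_0)
    fix b assume "b \<in> set bs"
    moreover obtain r0 c0 M' where "b = (r0, c0, M')"
      by (cases b)
    ultimately show "block_contrib i x b = 0"
      using zero by (auto simp: block_contrib_def)
  qed
  then show "(place R C ((0, 0, M) # bs) *\<^sub>v x) $ i = ext0 R (M *\<^sub>v subvec 0 (dim_col M) x) $ i"
    using fit x i by (simp add: index_place_mult_vec block_contrib_def ext0_def)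
qed (simp add: ext0_def place_def)

lemma restr_transpose_place_mult_vec:
  assumes fit: "blocks_fit R C ((0, 0, M) # bs)" and c: "c \<in> carrier_vec R"
    and right: "\<And>r0 c0 M'. (r0, c0, M') \<in> set bs \<Longrightarrow> dim_col M \<le> c0"
  shows "restr (dim_col M) (transpose_mat (place R C ((0, 0, M) # bs)) *\<^sub>v c) =
    transpose_mat M *\<^sub>v subvec 0 (dim_row M) c"
proof (rule eq_vecI)
  fix j assume "j < dim_vec (transpose_mat M *\<^sub>v subvec 0 (dim_row M) c)"
  then have j: "j < dim_col M"
    by simp
  have "(transpose_mat (place R C ((0, 0, M) # bs)) *\<^sub>v c) $ j =
      (place C R ((0, 0, transpose_mat M) # map transpose_block bs) *\<^sub>v c) $ j"
    by (simp add: transpose_place transpose_block_def)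
  also have "\<dots> = (transpose_mat M *\<^sub>v subvec 0 (dim_row M) c) $ j"
  proof -
    have fitT: "blocks_fit C R ((0, 0, transpose_mat M) # map transpose_block bs)"
      using blocks_fit_transpose[OF fit] by (simp add: transpose_block_def)
    have rightT: "\<And>r0 c0 M'. (r0, c0, M') \<in> set (map transpose_block bs) \<Longrightarrow>
        dim_row (transpose_mat M) \<le> r0"
      using right by (auto simp: transpose_block_def)
    show ?thesis
      using index_place_mult_vec_head[OF fitT c _ rightT] j by simp
  qed
  finally show "restr (dim_col M) (transpose_mat (place R C ((0, 0, M) # bs)) *\<^sub>v c) $ j =
      (transpose_mat M *\<^sub>v subvec 0 (dim_row M) c) $ j"
    using j by (simp add: restr_def)
qed (simp add: restr_def)

lemma transpose_place_mult_vec_zero_tail: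
  assumes fit: "blocks_fit R C ((0, 0, M) # bs)" and c: "c \<in> carrier_vec R"
    and zero: "\<And>r0 c0 M'. (r0, c0, M') \<in> set bs \<Longrightarrow> subvec r0 (dim_row M') c = 0\<^sub>v (dim_row M')"
  shows "transpose_mat (place R C ((0, 0, M) # bs)) *\<^sub>v c = ext0 C (transpose_mat M *\<^sub>v subvec 0 (dim_row M) c)"
proof -
  have "transpose_mat (place R C ((0, 0, M) # bs)) *\<^sub>v c =
      place C R ((0, 0, transpose_mat M) # map transpose_block bs) *\<^sub>v c"
    by (simp add: transpose_place transpose_block_def)
  also have "\<dots> = ext0 C (transpose_mat M *\<^sub>v subvec 0 (dim_row M) c)"
  proof -
    have fitT: "blocks_fit C R ((0, 0, transpose_mat M) # map transpose_block bs)"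
      using blocks_fit_transpose[OF fit] by (simp add: transpose_block_def)
    have zeroT: "\<And>r0 c0 M'. (r0, c0, M') \<in> set (map transpose_block bs) \<Longrightarrow>
        subvec c0 (dim_col M') c = 0\<^sub>v (dim_col M')"
      using zero by (auto simp: transpose_block_def)
    show ?thesis
      using place_mult_vec_zero_tail[OF fitT c zeroT] by simp
  qed
  finally show ?thesis .
qed

section \<open>Distances\<close>

lemma ker_carrier: "e \<in> ker H \<Longrightarrow> e \<in> carrier_vec (dim_col H)"
  by (simp add: ker_def)

lemma ker_mult_vec_index: "e \<in> ker H \<Longrightarrow> i < dim_row H \<Longrightarrow> (H *\<^sub>v e) $ i = 0"
  by (simp add: ker_def)

lemma wt_mult_le_mat_norm:
  assumes S: "S \<in> carrier_mat nG n" and x: "x \<in> carrier_vec nG"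
  shows "real (wt (transpose_mat S *\<^sub>v x)) \<le> mat_norm S * real (wt x)"
proof (cases "x = 0\<^sub>v nG")
  case True
  then have "transpose_mat S *\<^sub>v x = 0\<^sub>v n"
    using S by (intro eq_vecI) (auto simp: scalar_prod_def)
  then show ?thesis
    using True by simp
next
  case False
  let ?q = "\<lambda>x. real (wt (transpose_mat S *\<^sub>v x)) / real (wt x)"
  have "finite (?q ` {x \<in> carrier_vec nG. x \<noteq> 0\<^sub>v nG})"
    using finite_carrier_vec_bit by simp
  moreover have "{?q x | x. x \<in> carrier_vec (dim_row S) \<and> x \<noteq> 0\<^sub>v (dim_row S)} =
      ?q ` {x \<in> carrier_vec nG. x \<noteq> 0\<^sub>v nG}"
    using S by auto
  ultimately have "?q x \<le> mat_norm S"
    unfolding mat_norm_def using x False by (intro Max_ge) auto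
  moreover have "0 < real (wt x)"
    using wt_pos[OF x False] by simp
  ultimately show ?thesis
    by (simp add: pos_divide_le_eq)
qed

lemma mat_norm_ge_1:
  assumes S: "S \<in> carrier_mat nG n" and nz: "S \<noteq> 0\<^sub>m nG n"
  shows "1 \<le> mat_norm S"
proof -
  obtain i j where ij: "i < nG" "j < n" "S $$ (i, j) \<noteq> 0"
    using S nz by (metis carrier_matD eq_matI index_zero_mat)
  let ?x = "unit_vec nG i :: bit vec"
  have "supp_vec ?x = {i}"
    using ij by (auto simp: supp_vec_def split: if_splits)
  then have wt_x: "wt ?x = 1"
    by (simp add: wt_eq_card_supp_vec)
  have "(transpose_mat S *\<^sub>v ?x) $ j = S $$ (i, j)"
    using S ij by (simp add: index_mult_mat_vec_sum[of _ n nG] if_distrib[of "\<lambda>y. _ * y"]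
        cong: if_cong)
  then have "transpose_mat S *\<^sub>v ?x \<noteq> 0\<^sub>v n"
    using ij by (metis index_zero_vec(1))
  then have "1 \<le> wt (transpose_mat S *\<^sub>v ?x)"
    using S by (intro wt_pos) auto
  also have "real (wt (transpose_mat S *\<^sub>v ?x)) \<le> mat_norm S"
    using wt_mult_le_mat_norm[OF S unit_vec_carrier[of nG i]] wt_x by simp
  finally show ?thesis
    by simp
qed

lemma cdist_le_wt:
  "e \<in> ker H \<Longrightarrow> J *\<^sub>v e \<noteq> 0\<^sub>v (dim_row J) \<Longrightarrow> cdist H J \<le> enat (wt e)"
  unfolding cdist_def by (rule Inf_lower) blast

lemma le_cdist:
  assumes "\<And>e. e \<in> ker H \<Longrightarrow> J *\<^sub>v e \<noteq> 0\<^sub>v (dim_row J) \<Longrightarrow> x \<le> ereal (real (wt e))"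
  shows "x \<le> ereal_of_enat (cdist H J)"
proof -
  let ?A = "{enat (wt e) | e. e \<in> ker H \<and> J *\<^sub>v e \<noteq> 0\<^sub>v (dim_row J)}"
  show ?thesis
  proof (cases "?A = {}")
    case True
    then have "cdist H J = \<infinity>"
      by (simp add: cdist_def Inf_enat_def)
    then show ?thesis
      by simp
  next
    case False
    then obtain y where "y \<in> ?A"
      by blast
    then have "(LEAST y. y \<in> ?A) \<in> ?A"
      by (rule LeastI)
    then have "cdist H J \<in> ?A"
      using False by (simp add: cdist_def Inf_enat_def)
    then show ?thesis
      using assms by auto
  qed
qed

lemma cdist_ge_by_reduction:
  assumes red: "\<And>e. e \<in> ker H' \<Longrightarrow> J' *\<^sub>v e \<noteq> 0\<^sub>v (dim_row J') \<Longrightarrow>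
      (\<exists>e0 \<in> ker H. J *\<^sub>v e0 \<noteq> 0\<^sub>v (dim_row J) \<and> real (wt e0) \<le> c * real (wt e)) \<or>
      \<beta> \<le> ereal (real (wt e))"
    and c: "0 < c"
  shows "min (ereal_of_enat (cdist H J) / ereal c) \<beta> \<le> ereal_of_enat (cdist H' J')"
proof (rule le_cdist)
  fix e assume e: "e \<in> ker H'" "J' *\<^sub>v e \<noteq> 0\<^sub>v (dim_row J')"
  show "min (ereal_of_enat (cdist H J) / ereal c) \<beta> \<le> ereal (real (wt e))"
    using red[OF e]
  proof (elim disjE bexE conjE)
    fix e0 assume e0: "e0 \<in> ker H" "J *\<^sub>v e0 \<noteq> 0\<^sub>v (dim_row J)"
      and w: "real (wt e0) \<le> c * real (wt e)"
    from e0 have "cdist H J \<le> enat (wt e0)"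
      by (rule cdist_le_wt)
    then have "ereal_of_enat (cdist H J) \<le> ereal (real (wt e0))"
      by (metis ereal_of_enat_le_iff ereal_of_enat_simps(1))
    also have "\<dots> \<le> ereal (c * real (wt e))"
      using w by simp
    finally have "ereal_of_enat (cdist H J) \<le> ereal (c * real (wt e))" .
    then have "ereal_of_enat (cdist H J) / ereal c \<le> ereal (real (wt e))"
      using c by (simp add: ereal_divide_le_pos mult.commute)
    then show ?thesis
      by (simp add: min.coboundedI1)
  qed (simp add: min.coboundedI2)
qed

lemma ereal_of_enat_min: "ereal_of_enat (min a b) = min (ereal_of_enat a) (ereal_of_enat b)"
  by (simp add: min_def)

lemma min_div_le_min:
  fixes x y c \<beta> X Y :: ereal
  assumes "min (x / c) \<beta> \<le> X" and "y / c \<le> Y" and "0 < c"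
  shows "min (min x y / c) \<beta> \<le> min X Y"
proof -
  have x: "min x y / c \<le> x / c" and y: "min x y / c \<le> y / c"
    using assms(3) by (simp_all add: ereal_divide_right_mono)
  have "min (min x y / c) \<beta> \<le> min (x / c) \<beta>"
    using x by (rule min.mono) simp
  then have "min (min x y / c) \<beta> \<le> X"
    using assms(1) by (rule order_trans)
  moreover have "min (min x y / c) \<beta> \<le> y / c"
    using y by (rule min.coboundedI1)
  then have "min (min x y / c) \<beta> \<le> Y"
    using assms(2) by (rule order_trans)
  ultimately show ?thesis
    by simp
qed

section \<open>Row spaces and changes of logical basis\<close>

lemma rs_mem: "c \<in> carrier_vec (dim_row A) \<Longrightarrow> transpose_mat A *\<^sub>v c \<in> rs A"
  unfolding rs_def by blast

lemma rs_carrier: "A \<in> carrier_mat r n \<Longrightarrow> x \<in> rs A \<Longrightarrow> x \<in> carrier_vec n"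
  by (auto simp: rs_def)

lemma rs_mult_subset:
  assumes "A \<in> carrier_mat r k" and "M \<in> carrier_mat k n"
  shows "rs (A * M) \<subseteq> rs M"
proof
  fix x assume "x \<in> rs (A * M)"
  then obtain c where c: "c \<in> carrier_vec r" "x = transpose_mat (A * M) *\<^sub>v c"
    using assms by (auto simp: rs_def)
  then have "x = transpose_mat M *\<^sub>v (transpose_mat A *\<^sub>v c)"
    using assms by (simp add: transpose_mult)
  then show "x \<in> rs M"
    using assms c by (simp add: rs_mem carrier_matD)
qed

lemma rs_mult_invertible:
  assumes "A \<in> carrier_mat k k" "B \<in> carrier_mat k k" "B * A = 1\<^sub>m k" and M: "M \<in> carrier_mat k n"
  shows "rs (A * M) = rs M"
proof
  have "M = B * (A * M)"
    using assms by (simp flip: assoc_mult_mat)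
  then have "rs M = rs (B * (A * M))"
    by simp
  also have "\<dots> \<subseteq> rs (A * M)"
    using assms by (intro rs_mult_subset) auto
  finally show "rs M \<subseteq> rs (A * M)" .
qed (use assms in \<open>intro rs_mult_subset\<close>)

lemma transpose_append_rows_mult_vec:
  assumes A: "A \<in> carrier_mat q n" and B: "B \<in> carrier_mat p n"
    and a: "a \<in> carrier_vec q" and b: "b \<in> carrier_vec p"
  shows "transpose_mat (A @\<^sub>r B) *\<^sub>v (a @\<^sub>v b) = transpose_mat A *\<^sub>v a + transpose_mat B *\<^sub>v b"
proof (rule eq_vecI)
  have AB: "A @\<^sub>r B \<in> carrier_mat (q + p) n"
    using A B by simp
  fix j assume "j < dim_vec (transpose_mat A *\<^sub>v a + transpose_mat B *\<^sub>v b)"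
  then have j: "j < n"
    using B by simp
  have "col (A @\<^sub>r B) j = col A j @\<^sub>v col B j"
    unfolding append_rows_def using A B j by (subst col_four_block_mat) auto
  then show "(transpose_mat (A @\<^sub>r B) *\<^sub>v (a @\<^sub>v b)) $ j = (transpose_mat A *\<^sub>v a + transpose_mat B *\<^sub>v b) $ j"
    using A B a b j carrier_matD[OF AB] by (simp add: scalar_prod_append[of _ q _ p])
qed (use carrier_matD(2)[OF carrier_append_rows[OF A B]] B in simp)

lemma rs_append_rows:
  assumes A: "A \<in> carrier_mat q n" and B: "B \<in> carrier_mat p n"
  shows "rs (A @\<^sub>r B) = set_plus (rs A) (rs B)"
proof
  have AB: "dim_row (A @\<^sub>r B) = q + p"
    using carrier_matD(1)[OF carrier_append_rows[OF A B]] .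
  show "rs (A @\<^sub>r B) \<subseteq> set_plus (rs A) (rs B)"
  proof
    fix x assume "x \<in> rs (A @\<^sub>r B)"
    then obtain c where c: "c \<in> carrier_vec (q + p)" and xc: "x = transpose_mat (A @\<^sub>r B) *\<^sub>v c"
      by (auto simp: rs_def AB)
    have "x = transpose_mat (A @\<^sub>r B) *\<^sub>v (vec_first c q @\<^sub>v vec_last c p)"
      using c xc by simp
    also have "\<dots> = transpose_mat A *\<^sub>v vec_first c q + transpose_mat B *\<^sub>v vec_last c p"
      by (rule transpose_append_rows_mult_vec[OF A B]) simp_all
    finally have "x = transpose_mat A *\<^sub>v vec_first c q + transpose_mat B *\<^sub>v vec_last c p" .
    moreover have "transpose_mat A *\<^sub>v vec_first c q \<in> rs A" "transpose_mat B *\<^sub>v vec_last c p \<in> rs B"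
      by (intro rs_mem, simp add: carrier_matD[OF A] carrier_matD[OF B])+
    ultimately show "x \<in> set_plus (rs A) (rs B)"
      unfolding set_plus_def by blast
  qed
  show "set_plus (rs A) (rs B) \<subseteq> rs (A @\<^sub>r B)"
  proof
    fix x assume "x \<in> set_plus (rs A) (rs B)"
    then obtain a b where a: "a \<in> carrier_vec q" and b: "b \<in> carrier_vec p"
      and "x = transpose_mat A *\<^sub>v a + transpose_mat B *\<^sub>v b"
      using carrier_matD(1)[OF A] carrier_matD(1)[OF B] unfolding set_plus_def rs_def by blast
    then have "x = transpose_mat (A @\<^sub>r B) *\<^sub>v (a @\<^sub>v b)"
      using A B by (simp add: transpose_append_rows_mult_vec)
    then show "x \<in> rs (A @\<^sub>r B)"
      using a b by (simp add: rs_mem AB)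
  qed
qed

lemma rs_append_rows_subset:
  assumes A: "A \<in> carrier_mat q n" and B: "B \<in> carrier_mat p n"
  shows "rs A \<subseteq> rs (A @\<^sub>r B)"
proof
  fix x assume x: "x \<in> rs A"
  have "0\<^sub>v n \<in> rs B"
    using rs_mem[of "0\<^sub>v (dim_row B)" B] B by simp
  moreover have "x = x + 0\<^sub>v n"
    using rs_carrier[OF A x] by simp
  ultimately show "x \<in> rs (A @\<^sub>r B)"
    unfolding rs_append_rows[OF A B] set_plus_def using x by blast
qed

lemma rs_append_rows_dual:
  assumes A: "A \<in> carrier_mat q n" and C: "C \<in> carrier_mat p n"
    and A': "A' \<in> carrier_mat q n" and C': "C' \<in> carrier_mat p n"
    and dual: "(A' @\<^sub>r C') * transpose_mat (A @\<^sub>r C) = 1\<^sub>m (q + p)"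
    and x: "x \<in> rs (A @\<^sub>r C)" and A'x: "A' *\<^sub>v x = 0\<^sub>v q"
  shows "x \<in> rs C"
proof -
  have AC: "dim_row (A @\<^sub>r C) = q + p"
    using carrier_matD(1)[OF carrier_append_rows[OF A C]] .
  obtain c where c: "c \<in> carrier_vec (q + p)" and xc: "x = transpose_mat (A @\<^sub>r C) *\<^sub>v c"
    using x by (auto simp: rs_def AC)
  have ACm: "A @\<^sub>r C \<in> carrier_mat (q + p) n"
    using A C by simp
  have "(A' *\<^sub>v x) @\<^sub>v (C' *\<^sub>v x) = (A' @\<^sub>r C') *\<^sub>v x"
    using A' C' ACm c xc by (simp add: mat_mult_append)
  also have "\<dots> = ((A' @\<^sub>r C') * transpose_mat (A @\<^sub>r C)) *\<^sub>v c"
    unfolding xc using A' C' ACm c by (intro assoc_mult_mat_vec[symmetric]) auto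
  also have "\<dots> = vec_first c q @\<^sub>v vec_last c p"
    using c by (simp add: dual)
  finally have "vec_first c q = 0\<^sub>v q"
    using A'x by (subst (asm) append_vec_eq[of _ q]) auto
  then have "x = transpose_mat (A @\<^sub>r C) *\<^sub>v (0\<^sub>v q @\<^sub>v vec_last c p)"
    using xc c by (metis vec_first_last_append)
  also have "\<dots> = transpose_mat A *\<^sub>v 0\<^sub>v q + transpose_mat C *\<^sub>v vec_last c p"
    by (rule transpose_append_rows_mult_vec[OF A C]) simp_all
  finally have "x = transpose_mat A *\<^sub>v 0\<^sub>v q + transpose_mat C *\<^sub>v vec_last c p" .
  then have "x = transpose_mat C *\<^sub>v vec_last c p"
    using A C by simp
  then show ?thesis
    using C by (metis carrier_matD(1) rs_mem vec_last_carrier)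
qed

lemma mult_mat_vec_neq_0_factor:
  assumes "M \<in> carrier_mat r k" "J \<in> carrier_mat k n" "e \<in> carrier_vec n"
    and "(M * J) *\<^sub>v e \<noteq> 0\<^sub>v r"
  shows "J *\<^sub>v e \<noteq> 0\<^sub>v k"
proof
  assume "J *\<^sub>v e = 0\<^sub>v k"
  then have "(M * J) *\<^sub>v e = 0\<^sub>v r"
    using assms(1-3) by (simp add: assoc_mult_mat_vec)
  with assms(4) show False ..
qed

lemma append_rows_mult_vec_neq_0:
  assumes "A \<in> carrier_mat q n" "C \<in> carrier_mat p n" "e \<in> carrier_vec n"
    and "C *\<^sub>v e \<noteq> 0\<^sub>v p"
  shows "(A @\<^sub>r C) *\<^sub>v e \<noteq> 0\<^sub>v (q + p)"
proof
  assume eq: "(A @\<^sub>r C) *\<^sub>v e = 0\<^sub>v (q + p)"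
  have "(A *\<^sub>v e) @\<^sub>v (C *\<^sub>v e) = (A @\<^sub>r C) *\<^sub>v e"
    using assms by (simp add: mat_mult_append)
  also have "\<dots> = 0\<^sub>v q @\<^sub>v 0\<^sub>v p"
    unfolding eq by (intro eq_vecI) auto
  finally have "C *\<^sub>v e = 0\<^sub>v p"
    using assms by (subst (asm) append_vec_eq[of _ q]) auto
  then show False
    using assms by simp
qed

locale logical_split =
  fixes JX JZ Jbar Jinv JXA JXC JZA JZC :: "bit mat" and n k q :: nat
  assumes JX: "JX \<in> carrier_mat k n" and JZ: "JZ \<in> carrier_mat k n"
    and JXJZ: "JX * transpose_mat JZ = 1\<^sub>m k"
    and q: "q \<le> k" and JZA: "JZA \<in> carrier_mat q n" and JZC: "JZC \<in> carrier_mat (k - q) n"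
    and Jbar: "Jbar \<in> carrier_mat k k" and Jinv: "Jinv \<in> carrier_mat k k"
    and Jbar_Jinv: "Jbar * Jinv = 1\<^sub>m k" and Jinv_Jbar: "Jinv * Jbar = 1\<^sub>m k"
    and JZ_split: "JZA @\<^sub>r JZC = Jbar * JZ"
    and JXA: "JXA \<in> carrier_mat q n" and JXC: "JXC \<in> carrier_mat (k - q) n"
    and JX_split: "JXA @\<^sub>r JXC = transpose_mat Jinv * JX"
begin

lemma JX_split_carrier: "JXA @\<^sub>r JXC \<in> carrier_mat k n"
  and JZ_split_carrier: "JZA @\<^sub>r JZC \<in> carrier_mat k n"
  using carrier_append_rows[OF JXA JXC] carrier_append_rows[OF JZA JZC] q by simp_all

lemma rs_JX_split: "rs (JXA @\<^sub>r JXC) = rs JX"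
proof -
  have "transpose_mat Jbar * transpose_mat Jinv = 1\<^sub>m k"
    using Jbar Jinv Jinv_Jbar by (simp flip: transpose_mult)
  then show ?thesis
    unfolding JX_split using Jbar Jinv JX by (intro rs_mult_invertible) auto
qed

lemma rs_JZ_split: "rs (JZA @\<^sub>r JZC) = rs JZ"
  unfolding JZ_split by (rule rs_mult_invertible[OF Jbar Jinv Jinv_Jbar JZ])

lemma split_dual: "(JZA @\<^sub>r JZC) * transpose_mat (JXA @\<^sub>r JXC) = 1\<^sub>m (q + (k - q))"
proof -
  have "JZ * transpose_mat JX = transpose_mat (JX * transpose_mat JZ)"
    using JX JZ by (simp add: transpose_mult)
  then have JZ_JX: "JZ * transpose_mat JX = 1\<^sub>m k"
    by (simp add: JXJZ)
  have JX_split_T: "transpose_mat (JXA @\<^sub>r JXC) = transpose_mat JX * Jinv"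
    unfolding JX_split using Jinv JX by (simp add: transpose_mult)
  have "(JZA @\<^sub>r JZC) * transpose_mat (JXA @\<^sub>r JXC) = Jbar * (JZ * (transpose_mat JX * Jinv))"
    unfolding JZ_split JX_split_T using Jbar JZ JX Jinv by (intro assoc_mult_mat) auto
  also have "JZ * (transpose_mat JX * Jinv) = (JZ * transpose_mat JX) * Jinv"
    using JZ JX Jinv by (intro assoc_mult_mat[symmetric]) auto
  finally show ?thesis
    using Jinv Jbar_Jinv q by (simp add: JZ_JX)
qed

lemma JX_neq_0_of_JXC:
  assumes "e \<in> carrier_vec n" and "JXC *\<^sub>v e \<noteq> 0\<^sub>v (k - q)"
  shows "JX *\<^sub>v e \<noteq> 0\<^sub>v (dim_row JX)"
proof -
  have "(transpose_mat Jinv * JX) *\<^sub>v e \<noteq> 0\<^sub>v k"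
    using append_rows_mult_vec_neq_0[OF JXA JXC assms] q by (simp add: JX_split)
  then show ?thesis
    using mult_mat_vec_neq_0_factor[of "transpose_mat Jinv" k k JX n e] Jinv JX assms(1) by simp
qed

lemma JX_neq_0_of_split:
  assumes "e \<in> carrier_vec n" and "(JXA @\<^sub>r JXC) *\<^sub>v e \<noteq> 0\<^sub>v k"
  shows "JX *\<^sub>v e \<noteq> 0\<^sub>v (dim_row JX)"
  using mult_mat_vec_neq_0_factor[of "transpose_mat Jinv" k k JX n e] Jinv JX assms
  by (simp add: JX_split)

lemma JZ_neq_0_of_JZC:
  assumes "e \<in> carrier_vec n" and "JZC *\<^sub>v e \<noteq> 0\<^sub>v (k - q)"
  shows "JZ *\<^sub>v e \<noteq> 0\<^sub>v (dim_row JZ)"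
proof -
  have "(Jbar * JZ) *\<^sub>v e \<noteq> 0\<^sub>v k"
    using append_rows_mult_vec_neq_0[OF JZA JZC assms] q by (simp add: JZ_split)
  then show ?thesis
    using mult_mat_vec_neq_0_factor[of Jbar k k JZ n e] Jbar JZ assms(1) by simp
qed

lemma JZ_neq_0_of_split:
  assumes "e \<in> carrier_vec n" and "(JZA @\<^sub>r JZC) *\<^sub>v e \<noteq> 0\<^sub>v k"
  shows "JZ *\<^sub>v e \<noteq> 0\<^sub>v (dim_row JZ)"
  using mult_mat_vec_neq_0_factor[of Jbar k k JZ n e] Jbar JZ assms by (simp add: JZ_split)

end

section \<open>The deformed codes\<close>

text \<open>Both deformed codes share the column layout \<open>u\<^sub>0, u\<^sub>1, \<dots>, u\<^bsub>d\<^sub>R-1\<^esub>, w\<^sub>1, \<dots>, w\<^bsub>nw\<^esub>\<close>,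
  with \<open>nw = d\<^sub>R\<close> for the measurement sticker and \<open>nw = d\<^sub>R - 1\<close> for the branch sticker;
  the branch sticker is the measurement sticker with \<open>w\<^bsub>d\<^sub>R\<^esub>\<close> deleted.\<close>

locale sticker_code =
  fixes HX HZ HG S T :: "bit mat" and n rX rZ nG rG dR nw :: nat
  assumes HX: "HX \<in> carrier_mat rX n" and HZ: "HZ \<in> carrier_mat rZ n"
    and HG: "HG \<in> carrier_mat rG nG" and S: "S \<in> carrier_mat nG n" and T: "T \<in> carrier_mat rX rG"
    and compat: "HX * transpose_mat S = T * HG"
    and dR: "2 \<le> dR" and nw: "dR - 1 \<le> nw" "nw \<le> dR"
begin

lemma dim_code_mats [simp]:
  "dim_row HX = rX" "dim_col HX = n" "dim_row HZ = rZ" "dim_col HZ = n"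
  "dim_row HG = rG" "dim_col HG = nG" "dim_row S = nG" "dim_col S = n"
  "dim_row T = rX" "dim_col T = rG"
  using HX HZ HG S T by auto

abbreviation U :: "nat \<Rightarrow> nat" where "U \<equiv> uoff n nG"
abbreviation W :: "nat \<Rightarrow> nat" where "W \<equiv> woff n nG dR rG"
abbreviation N :: nat where "N \<equiv> n + (dR - 1) * nG + nw * rG"

lemma nw_pos: "1 \<le> nw"
  using dR nw by linarith

lemma n_le_U: "n \<le> U j"
  by (simp add: uoff_def)

lemma n_le_W: "n \<le> W j"
  by (simp add: woff_def)

lemma U_add_le_W:
  assumes "j < dR"
  shows "U j + nG \<le> W j'"
proof -
  have "(j - 1) * nG + nG \<le> max j 1 * nG"
    by (cases j) auto
  also have "\<dots> \<le> (dR - 1) * nG"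
    using assms dR by (intro mult_le_mono1) auto
  finally show ?thesis
    by (simp add: uoff_def woff_def)
qed

lemma U_add_le_N: "j < dR \<Longrightarrow> U j + nG \<le> N"
  using U_add_le_W[of j 1] by (simp add: woff_def)

lemma W_add_le_N: "1 \<le> j \<Longrightarrow> j \<le> nw \<Longrightarrow> W j + rG \<le> N"
  using mult_le_mono1[of j nw rG] by (cases j) (auto simp: woff_def)

definition HX_blocks :: "(nat \<times> nat \<times> bit mat) list" where
  "HX_blocks = concat (map (\<lambda>j. [(rX + (j - 1) * rG, U j, HG), (rX + (j - 1) * rG, W j, 1\<^sub>m rG)] @
     (if j < nw then [(rX + (j - 1) * rG, W (j + 1), 1\<^sub>m rG)] else [])) [1..<dR])"

definition HXd :: "bit mat" where
  "HXd = place (rX + (dR - 1) * rG) N ((0, 0, HX) # (0, W 1, T) # HX_blocks)"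

definition HZ_blocks :: "(nat \<times> nat \<times> bit mat) list" where
  "HZ_blocks = concat (map (\<lambda>i.
     (if i = 1 then [(rZ + (i - 1) * nG, 0, S)] else []) @
     (if 2 \<le> i then [(rZ + (i - 1) * nG, U (i - 1), 1\<^sub>m nG)] else []) @
     (if i \<le> dR - 1 then [(rZ + (i - 1) * nG, U i, 1\<^sub>m nG)] else []) @
     [(rZ + (i - 1) * nG, W i, transpose_mat HG)]) [1..<nw + 1])"

definition HZd :: "bit mat" where
  "HZd = place (rZ + nw * nG) N ((0, 0, HZ) # HZ_blocks)"

definition JX_blocks :: "bit mat \<Rightarrow> bit mat \<Rightarrow> (nat \<times> nat \<times> bit mat) list" where
  "JX_blocks J \<gamma> = map (\<lambda>j. (0, U j, J * transpose_mat S)) [1..<dR] @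
     (if nw = dR then [(0, W dR, \<gamma>)] else [])"

definition JXd :: "bit mat \<Rightarrow> bit mat \<Rightarrow> bit mat" where
  "JXd J \<gamma> = place (dim_row J) N ((0, 0, J) # JX_blocks J \<gamma>)"

definition JZd :: "bit mat \<Rightarrow> bit mat" where
  "JZd J = place (dim_row J) N [(0, 0, J)]"

lemma HX_MM_eq: "nw = dR \<Longrightarrow> HX_MM dR HX HG T = HXd"
  unfolding HX_MM_def HXd_def HX_blocks_def NMM_def Let_def dim_code_mats
  by (auto intro!: arg_cong[where f = "\<lambda>bs. place _ _ (_ # _ # concat bs)"] map_cong)

lemma HX_MB_eq: "nw = dR - 1 \<Longrightarrow> HX_MB dR HX HG T = HXd"
  unfolding HX_MB_def HXd_def HX_blocks_def NMB_def Let_def dim_code_mats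
  by (auto intro!: arg_cong[where f = "\<lambda>bs. place _ _ (_ # _ # concat bs)"] map_cong)

lemma HZ_MM_eq: "nw = dR \<Longrightarrow> HZ_MM dR HZ HG S = HZd"
  unfolding HZ_MM_def HZd_def HZ_blocks_def NMM_def Let_def dim_code_mats by simp

lemma HZ_MB_eq: "nw = dR - 1 \<Longrightarrow> HZ_MB dR HZ HG S = HZd"
  unfolding HZ_MB_def HZd_def HZ_blocks_def NMB_def Let_def dim_code_mats using dR
  by (auto intro!: arg_cong[where f = "\<lambda>bs. place _ _ (_ # concat bs)"] map_cong)

lemma JX_MM_eq: "nw = dR \<Longrightarrow> J \<in> carrier_mat k n \<Longrightarrow> JX_MM dR J HG S \<gamma> = JXd J \<gamma>"
  unfolding JX_MM_def JXd_def JX_blocks_def NMM_def Let_def by simp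

lemma JX_MB_eq:
  assumes "nw = dR - 1" and "J \<in> carrier_mat k n"
  shows "JX_MB dR J HG S = JXd J \<gamma>"
proof -
  have "nw \<noteq> dR"
    using assms(1) dR by simp
  then show ?thesis
    using assms unfolding JX_MB_def JXd_def JX_blocks_def NMB_def Let_def by simp
qed

lemma JZ_MM_eq: "nw = dR \<Longrightarrow> J \<in> carrier_mat k n \<Longrightarrow> JZ_MM dR J HG = JZd J"
  unfolding JZ_MM_def JZd_def NMM_def Let_def by simp

lemma JZ_MB_eq: "nw = dR - 1 \<Longrightarrow> J \<in> carrier_mat k n \<Longrightarrow> JZ_MB dR J HG = JZd J"
  unfolding JZ_MB_def JZd_def NMB_def Let_def by simp

lemma HX_blocks_cases:
  assumes "(r0, c0, M) \<in> set HX_blocks"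
  obtains j where "1 \<le> j" "j < dR" "r0 = rX + (j - 1) * rG"
    "c0 = U j \<and> M = HG \<or> c0 = W j \<and> M = 1\<^sub>m rG \<or> j < nw \<and> c0 = W (j + 1) \<and> M = 1\<^sub>m rG"
  using assms unfolding HX_blocks_def by (auto split: if_splits)

lemma HZ_blocks_cases:
  assumes "(r0, c0, M) \<in> set HZ_blocks"
  obtains i where "1 \<le> i" "i \<le> nw" "r0 = rZ + (i - 1) * nG"
    "c0 = 0 \<and> M = S \<and> i = 1 \<or> c0 = U (i - 1) \<and> M = 1\<^sub>m nG \<and> 2 \<le> i \<or>
     c0 = U i \<and> M = 1\<^sub>m nG \<and> i \<le> dR - 1 \<or> c0 = W i \<and> M = transpose_mat HG"
proof -
  from assms obtain i where "i \<in> {1..<nw + 1}" and "(r0, c0, M) \<in> set (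
     (if i = 1 then [(rZ + (i - 1) * nG, 0, S)] else []) @
     (if 2 \<le> i then [(rZ + (i - 1) * nG, U (i - 1), 1\<^sub>m nG)] else []) @
     (if i \<le> dR - 1 then [(rZ + (i - 1) * nG, U i, 1\<^sub>m nG)] else []) @
     [(rZ + (i - 1) * nG, W i, transpose_mat HG)])"
    unfolding HZ_blocks_def set_concat set_map set_upt image_image by blast
  then show thesis
    using that[of i] by (auto split: if_splits)
qed

lemma blocks_fit_HXd: "blocks_fit (rX + (dR - 1) * rG) N ((0, 0, HX) # (0, W 1, T) # HX_blocks)"
proof -
  have "r0 + dim_row M \<le> rX + (dR - 1) * rG \<and> c0 + dim_col M \<le> N"
    if "(r0, c0, M) \<in> set HX_blocks" for r0 c0 M
    using that
  proof (rule HX_blocks_cases)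
    fix j assume "1 \<le> j" "j < dR" "r0 = rX + (j - 1) * rG"
      "c0 = U j \<and> M = HG \<or> c0 = W j \<and> M = 1\<^sub>m rG \<or> j < nw \<and> c0 = W (j + 1) \<and> M = 1\<^sub>m rG"
    then show ?thesis
      using block_rows_le[of j "dR - 1" rG] U_add_le_N[of j] W_add_le_N[of j] W_add_le_N[of "j + 1"] nw
      by auto
  qed
  then show ?thesis
    using W_add_le_N[of 1] dR nw by (auto simp: blocks_fit_def)
qed

lemma blocks_fit_HZd: "blocks_fit (rZ + nw * nG) N ((0, 0, HZ) # HZ_blocks)"
proof -
  have "r0 + dim_row M \<le> rZ + nw * nG \<and> c0 + dim_col M \<le> N"
    if "(r0, c0, M) \<in> set HZ_blocks" for r0 c0 M
    using that
  proof (rule HZ_blocks_cases)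
    fix i assume "1 \<le> i" "i \<le> nw" "r0 = rZ + (i - 1) * nG"
      "c0 = 0 \<and> M = S \<and> i = 1 \<or> c0 = U (i - 1) \<and> M = 1\<^sub>m nG \<and> 2 \<le> i \<or>
       c0 = U i \<and> M = 1\<^sub>m nG \<and> i \<le> dR - 1 \<or> c0 = W i \<and> M = transpose_mat HG"
    then show ?thesis
      using block_rows_le[of i nw nG] U_add_le_N[of i] U_add_le_N[of "i - 1"] W_add_le_N[of i] nw
      by auto
  qed
  then show ?thesis
    by (auto simp: blocks_fit_def)
qed

lemma blocks_fit_JXd:
  assumes "J \<in> carrier_mat k n" and "\<gamma> \<in> carrier_mat k rG"
  shows "blocks_fit k N ((0, 0, J) # JX_blocks J \<gamma>)"
  using assms U_add_le_N W_add_le_N[of dR] dR by (auto simp: blocks_fit_def JX_blocks_def)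

lemma HZd_carrier: "HZd \<in> carrier_mat (rZ + nw * nG) N"
  by (simp add: HZd_def)

text \<open>The block \<open>w\<^sub>j\<close> with \<open>j > nw\<close> reads as zero, so that the branch sticker's last \<open>X\<close>-check
  \<open>H\<^sub>G u\<^bsub>d\<^sub>R-1\<^esub> = w\<^bsub>d\<^sub>R-1\<^esub>\<close> takes the same form \<open>H\<^sub>G u\<^sub>j = w\<^sub>j + w\<^sub>j\<^sub>+\<^sub>1\<close> as the others.\<close>

abbreviation u_block :: "bit vec \<Rightarrow> nat \<Rightarrow> bit vec" where
  "u_block e j \<equiv> subvec (U j) nG e"

definition w_block :: "bit vec \<Rightarrow> nat \<Rightarrow> bit vec" where
  "w_block e j = (if j \<le> nw then subvec (W j) rG e else 0\<^sub>v rG)"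

definition u_sum :: "bit vec \<Rightarrow> nat \<Rightarrow> bit vec" where
  "u_sum e m = vec nG (\<lambda>t. \<Sum>j\<in>{1..<m}. u_block e j $ t)"

lemma w_block_carrier [simp]: "w_block e j \<in> carrier_vec rG"
  and dim_w_block [simp]: "dim_vec (w_block e j) = rG"
  by (simp_all add: w_block_def)

lemma w_block_1: "w_block e 1 = subvec (W 1) rG e"
  using nw_pos by (simp add: w_block_def)

lemma u_sum_carrier [simp]: "u_sum e m \<in> carrier_vec nG"
  by (simp add: u_sum_def)

lemma HXd_mult_vec_top:
  assumes e: "e \<in> carrier_vec N" and i: "i < rX"
  shows "(HXd *\<^sub>v e) $ i = (HX *\<^sub>v restr n e) $ i + (T *\<^sub>v w_block e 1) $ i"
proof -
  have "(\<Sum>b\<leftarrow>HX_blocks. block_contrib i e b) = 0"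
  proof (rule sum_list_map_eq_0)
    fix b assume b: "b \<in> set HX_blocks"
    obtain r0 c0 M where bb: "b = (r0, c0, M)"
      by (cases b)
    have "rX \<le> r0"
      using b unfolding bb by (rule HX_blocks_cases) auto
    then show "block_contrib i e b = 0"
      using i unfolding bb by (intro block_contrib_out) auto
  qed
  then show ?thesis
    unfolding w_block_1 using blocks_fit_HXd e i
    by (simp add: HXd_def index_place_mult_vec block_contrib_in restr_eq_subvec)
qed

lemma HXd_mult_vec_block:
  assumes e: "e \<in> carrier_vec N" and j: "1 \<le> j" "j < dR" and i: "i < rG"
  shows "(HXd *\<^sub>v e) $ (rX + (j - 1) * rG + i) =
    (HG *\<^sub>v u_block e j) $ i + w_block e j $ i + w_block e (j + 1) $ i"
proof -
  let ?i = "rX + (j - 1) * rG + i"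
  let ?blocks = "\<lambda>j. [(rX + (j - 1) * rG, U j, HG), (rX + (j - 1) * rG, W j, 1\<^sub>m rG)] @
     (if j < nw then [(rX + (j - 1) * rG, W (j + 1), 1\<^sub>m rG)] else [])"
  have "?i < rX + (dR - 1) * rG"
    using block_rows_le[of j "dR - 1" rG] j i by linarith
  then have "(HXd *\<^sub>v e) $ ?i = (\<Sum>j'\<in>{1..<dR}. \<Sum>b\<leftarrow>?blocks j'. block_contrib ?i e b)"
    using blocks_fit_HXd e
    by (simp add: HXd_def index_place_mult_vec HX_blocks_def sum_list_concat_map_upt block_contrib_out)
  also have "\<dots> = (\<Sum>b\<leftarrow>?blocks j. block_contrib ?i e b)"
  proof (rule sum.mono_neutral_right[of "{1..<dR}" "{j}", THEN trans])
    show "\<forall>j'\<in>{1..<dR} - {j}. (\<Sum>b\<leftarrow>?blocks j'. block_contrib ?i e b) = 0"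
    proof
      fix j' assume j': "j' \<in> {1..<dR} - {j}"
      then have "\<not> (rX + (j' - 1) * rG \<le> ?i \<and> ?i < rX + (j' - 1) * rG + rG)"
        using block_index_unique[of i rG j j' rX] i j by auto
      then show "(\<Sum>b\<leftarrow>?blocks j'. block_contrib ?i e b) = 0"
        by (simp add: block_contrib_out)
    qed
  qed (use j in simp_all)
  also have "\<dots> = (HG *\<^sub>v u_block e j) $ i + w_block e j $ i + w_block e (j + 1) $ i"
    using i j nw by (simp add: block_contrib_in w_block_def add.assoc)
  finally show ?thesis .
qed

lemma HZd_mult_vec_top:
  assumes e: "e \<in> carrier_vec N" and i: "i < rZ"
  shows "(HZd *\<^sub>v e) $ i = (HZ *\<^sub>v restr n e) $ i"
proof -
  have "\<And>r0 c0 M. (r0, c0, M) \<in> set HZ_blocks \<Longrightarrow> dim_row HZ \<le> r0"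
    by (erule HZ_blocks_cases) auto
  then show ?thesis
    unfolding HZd_def using index_place_mult_vec_head[OF blocks_fit_HZd e] i
    by (simp add: restr_eq_subvec)
qed

lemma JXd_mult_vec:
  assumes J: "J \<in> carrier_mat k n" and \<gamma>: "\<gamma> \<in> carrier_mat k rG" and e: "e \<in> carrier_vec N"
  shows "JXd J \<gamma> *\<^sub>v e = J *\<^sub>v restr n e + (J * transpose_mat S) *\<^sub>v u_sum e dR + \<gamma> *\<^sub>v w_block e dR"
proof (rule eq_vecI)
  fix r assume "r < dim_vec (J *\<^sub>v restr n e + (J * transpose_mat S) *\<^sub>v u_sum e dR + \<gamma> *\<^sub>v w_block e dR)"
  then have r: "r < k"
    using \<gamma> by simp
  have "(\<Sum>j\<leftarrow>[1..<dR]. block_contrib r e (0, U j, J * transpose_mat S)) =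
      (\<Sum>j\<in>{1..<dR}. ((J * transpose_mat S) *\<^sub>v u_block e j) $ r)"
    unfolding interv_sum_list_conv_sum_set_nat set_upt using J S r
    by (intro sum.cong refl) (simp add: block_contrib_def carrier_matD[OF J])
  also have "\<dots> = ((J * transpose_mat S) *\<^sub>v u_sum e dR) $ r"
    unfolding u_sum_def by (rule mult_mat_vec_sum_vec[symmetric]) (use J S r in auto)
  finally have "(\<Sum>j\<leftarrow>[1..<dR]. block_contrib r e (0, U j, J * transpose_mat S)) =
      ((J * transpose_mat S) *\<^sub>v u_sum e dR) $ r" .
  moreover have "(\<Sum>b\<leftarrow>(if nw = dR then [(0, W dR, \<gamma>)] else []). block_contrib r e b) =
      (\<gamma> *\<^sub>v w_block e dR) $ r"
    using \<gamma> r nw by (auto simp: block_contrib_in w_block_def)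
  ultimately show "(JXd J \<gamma> *\<^sub>v e) $ r = (J *\<^sub>v restr n e + (J * transpose_mat S) *\<^sub>v u_sum e dR +
      \<gamma> *\<^sub>v w_block e dR) $ r"
    using blocks_fit_JXd[OF J \<gamma>] J \<gamma> e r
    by (simp add: JXd_def JX_blocks_def index_place_mult_vec block_contrib_in restr_eq_subvec comp_def)
qed (use J \<gamma> in \<open>simp add: JXd_def dim_row_place\<close>)

lemma JZd_mult_vec:
  assumes J: "J \<in> carrier_mat k n" and e: "e \<in> carrier_vec N"
  shows "JZd J *\<^sub>v e = J *\<^sub>v restr n e"
proof (rule eq_vecI)
  fix r assume "r < dim_vec (J *\<^sub>v restr n e)"
  moreover have "blocks_fit k N [(0, 0, J)]"
    using J U_add_le_N[of 1] n_le_U[of 1] by (simp add: blocks_fit_def)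
  ultimately show "(JZd J *\<^sub>v e) $ r = (J *\<^sub>v restr n e) $ r"
    using index_place_mult_vec_head[of k N J "[]" e r] J e by (simp add: JZd_def restr_eq_subvec)
qed (use J in \<open>simp add: JZd_def dim_row_place\<close>)

lemma restr_HXd_transpose:
  assumes "c \<in> carrier_vec (rX + (dR - 1) * rG)"
  shows "restr n (transpose_mat HXd *\<^sub>v c) = transpose_mat HX *\<^sub>v subvec 0 rX c"
proof -
  have "\<And>r0 c0 M. (r0, c0, M) \<in> set ((0, W 1, T) # HX_blocks) \<Longrightarrow> n \<le> c0"
    using n_le_U n_le_W by (auto elim: HX_blocks_cases)
  then show ?thesis
    using restr_transpose_place_mult_vec[OF blocks_fit_HXd assms] by (simp add: HXd_def)
qed

lemma restr_JXd_transpose: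
  assumes J: "J \<in> carrier_mat k n" and \<gamma>: "\<gamma> \<in> carrier_mat k rG" and b: "b \<in> carrier_vec k"
  shows "restr n (transpose_mat (JXd J \<gamma>) *\<^sub>v b) = transpose_mat J *\<^sub>v b"
proof -
  have "\<And>r0 c0 M. (r0, c0, M) \<in> set (JX_blocks J \<gamma>) \<Longrightarrow> dim_col J \<le> c0"
    using J n_le_U n_le_W by (auto simp: JX_blocks_def)
  moreover have "subvec 0 k b = b"
    using b by (intro eq_vecI) auto
  ultimately show ?thesis
    using restr_transpose_place_mult_vec[OF blocks_fit_JXd[OF J \<gamma>] b] J by (simp add: JXd_def)
qed

lemma HZd_transpose_top:
  assumes a: "a \<in> carrier_vec rZ"
  shows "transpose_mat HZd *\<^sub>v (a @\<^sub>v 0\<^sub>v (nw * nG)) = ext0 N (transpose_mat HZ *\<^sub>v a)"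
proof -
  have "subvec r0 (dim_row M) (a @\<^sub>v 0\<^sub>v (nw * nG)) = 0\<^sub>v (dim_row M)"
    if "(r0, c0, M) \<in> set HZ_blocks" for r0 c0 M
    using that
  proof (rule HZ_blocks_cases)
    fix i assume "1 \<le> i" "i \<le> nw" "r0 = rZ + (i - 1) * nG"
      "c0 = 0 \<and> M = S \<and> i = 1 \<or> c0 = U (i - 1) \<and> M = 1\<^sub>m nG \<and> 2 \<le> i \<or>
       c0 = U i \<and> M = 1\<^sub>m nG \<and> i \<le> dR - 1 \<or> c0 = W i \<and> M = transpose_mat HG"
    then have "dim_row M = nG" and "rZ \<le> r0" and "r0 + nG \<le> rZ + nw * nG"
      using block_rows_le[of i nw nG] by auto
    then show ?thesis
      using a by (intro eq_vecI) auto
  qed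
  moreover have "subvec 0 rZ (a @\<^sub>v 0\<^sub>v (nw * nG)) = a"
    using a by (intro eq_vecI) auto
  ultimately show ?thesis
    using transpose_place_mult_vec_zero_tail[OF blocks_fit_HZd] a by (simp add: HZd_def)
qed

lemma JZd_transpose:
  assumes J: "J \<in> carrier_mat k n" and b: "b \<in> carrier_vec k"
  shows "transpose_mat (JZd J) *\<^sub>v b = ext0 N (transpose_mat J *\<^sub>v b)"
proof -
  have "subvec 0 k b = b"
    using b by (intro eq_vecI) auto
  then show ?thesis
    using transpose_place_mult_vec_zero_tail[of k N J "[]" b] J b U_add_le_N[of 1] n_le_U[of 1]
    by (simp add: JZd_def blocks_fit_def)
qed

lemma ker_HXd_carrier: "e \<in> ker HXd \<Longrightarrow> e \<in> carrier_vec N"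
  using ker_carrier[of e HXd] by (simp add: HXd_def dim_col_place)

lemma ker_HZd_carrier: "e \<in> ker HZd \<Longrightarrow> e \<in> carrier_vec N"
  using ker_carrier[of e HZd] by (simp add: HZd_def dim_col_place)

lemma ker_HXd_top:
  assumes e: "e \<in> ker HXd"
  shows "HX *\<^sub>v restr n e = T *\<^sub>v w_block e 1"
proof (rule eq_vecI)
  fix i assume "i < dim_vec (T *\<^sub>v w_block e 1)"
  then have i: "i < rX"
    by simp
  then have "(HXd *\<^sub>v e) $ i = 0"
    using e by (intro ker_mult_vec_index) (simp_all add: HXd_def dim_row_place)
  then show "(HX *\<^sub>v restr n e) $ i = (T *\<^sub>v w_block e 1) $ i"
    using HXd_mult_vec_top[OF ker_HXd_carrier[OF e] i] by (simp add: bit_add_eq_0_iff)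
qed simp

lemma ker_HXd_block:
  assumes e: "e \<in> ker HXd" and j: "1 \<le> j" "j < dR"
  shows "HG *\<^sub>v u_block e j = w_block e j + w_block e (j + 1)"
proof (rule eq_vecI)
  fix i assume "i < dim_vec (w_block e j + w_block e (j + 1))"
  then have i: "i < rG"
    by simp
  have "rX + (j - 1) * rG + i < rX + (dR - 1) * rG"
    using block_rows_le[of j "dR - 1" rG] j i by linarith
  then have "(HXd *\<^sub>v e) $ (rX + (j - 1) * rG + i) = 0"
    using e by (intro ker_mult_vec_index) (simp_all add: HXd_def dim_row_place)
  then show "(HG *\<^sub>v u_block e j) $ i = (w_block e j + w_block e (j + 1)) $ i"
    using HXd_mult_vec_block[OF ker_HXd_carrier[OF e] j i] i
    by (simp add: add.assoc bit_add_eq_0_iff)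
qed simp

lemma ker_HXd_telescope:
  assumes e: "e \<in> ker HXd" and m: "1 \<le> m" "m \<le> dR"
  shows "HG *\<^sub>v u_sum e m = w_block e 1 + w_block e m"
proof (rule eq_vecI)
  fix i assume "i < dim_vec (w_block e 1 + w_block e m)"
  then have i: "i < rG"
    by simp
  have "(HG *\<^sub>v u_sum e m) $ i = (\<Sum>j\<in>{1..<m}. (HG *\<^sub>v u_block e j) $ i)"
    unfolding u_sum_def using HG i by (intro mult_mat_vec_sum_vec) auto
  also have "\<dots> = (\<Sum>j\<in>{1..<m}. w_block e j $ i + w_block e (Suc j) $ i)"
    using ker_HXd_block[OF e] i m by (intro sum.cong refl) auto
  also have "\<dots> = w_block e 1 $ i + w_block e m $ i"
    using m by (intro telescope_bit)
  finally show "(HG *\<^sub>v u_sum e m) $ i = (w_block e 1 + w_block e m) $ i"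
    using i by simp
qed simp

lemma ker_HXd_reduced:
  assumes e: "e \<in> ker HXd" and m: "1 \<le> m" "m \<le> dR" and wm: "w_block e m = 0\<^sub>v rG"
  shows "restr n e + transpose_mat S *\<^sub>v u_sum e m \<in> ker HX"
proof -
  have "HX *\<^sub>v (transpose_mat S *\<^sub>v u_sum e m) = T *\<^sub>v (HG *\<^sub>v u_sum e m)"
    using HX S T HG by (simp flip: assoc_mult_mat_vec add: compat)
  also have "\<dots> = T *\<^sub>v w_block e 1"
    using ker_HXd_telescope[OF e m] wm by simp
  finally have "HX *\<^sub>v (restr n e + transpose_mat S *\<^sub>v u_sum e m) = T *\<^sub>v w_block e 1 + T *\<^sub>v w_block e 1"
    using HX S ker_HXd_top[OF e] by (simp add: mult_add_distrib_mat_vec)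
  also have "\<dots> = 0\<^sub>v rX"
    using T by (intro eq_vecI) auto
  finally show ?thesis
    using HX S by (simp add: ker_def)
qed

lemma JXd_mult_vec_reduced:
  assumes e: "e \<in> ker HXd" and J: "J \<in> carrier_mat k n" and \<gamma>: "\<gamma> \<in> carrier_mat k rG"
    and m: "1 \<le> m" "m \<le> dR" and wm: "w_block e m = 0\<^sub>v rG"
    and gam: "m = dR \<or> J * transpose_mat S = \<gamma> * HG"
  shows "J *\<^sub>v (restr n e + transpose_mat S *\<^sub>v u_sum e m) = JXd J \<gamma> *\<^sub>v e"
proof -
  have L: "J *\<^sub>v (restr n e + transpose_mat S *\<^sub>v u_sum e m) =
      J *\<^sub>v restr n e + (J * transpose_mat S) *\<^sub>v u_sum e m"
    using J S by (simp add: mult_add_distrib_mat_vec)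
  have R: "JXd J \<gamma> *\<^sub>v e = J *\<^sub>v restr n e + (J * transpose_mat S) *\<^sub>v u_sum e dR + \<gamma> *\<^sub>v w_block e dR"
    by (rule JXd_mult_vec[OF J \<gamma> ker_HXd_carrier[OF e]])
  from gam show ?thesis
  proof
    assume "m = dR"
    then show ?thesis
      unfolding L R using wm J S \<gamma> by (intro eq_vecI) auto
  next
    assume gam: "J * transpose_mat S = \<gamma> * HG"
    have "(J * transpose_mat S) *\<^sub>v u_sum e m' = \<gamma> *\<^sub>v (w_block e 1 + w_block e m')"
      if "1 \<le> m'" "m' \<le> dR" for m'
      unfolding gam using \<gamma> HG ker_HXd_telescope[OF e that] by simp
    \<comment> \<open>both sides equal \<open>J u\<^sub>0 + \<gamma> w\<^sub>1\<close>\<close>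
    from this[OF m] this[of dR] show ?thesis
      unfolding L R using wm dR \<gamma> J by (intro eq_vecI) (auto simp: mult_add_distrib_mat_vec add.assoc)
  qed
qed

lemma wt_u_blocks_le:
  assumes e: "e \<in> carrier_vec N"
  shows "wt (restr n e) + (\<Sum>j\<in>{1..<dR}. wt (u_block e j)) \<le> wt e"
proof -
  define c where "c j = (if j = 0 then 0 else U j)" for j :: nat
  define m where "m j = (if j = 0 then n else nG)" for j :: nat
  have "(\<Sum>j\<in>{0..<dR}. wt (subvec (c j) (m j) e)) \<le> wt e"
  proof (rule sum_wt_subvec_le)
    fix j assume "j \<in> {0..<dR}"
    then show "c j + m j \<le> dim_vec e"
      using e U_add_le_N[of j] by (auto simp: c_def m_def)
  next
    fix j j' :: nat assume "j \<in> {0..<dR}" "j' \<in> {0..<dR}" "j < j'"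
    then show "c j + m j \<le> c j'"
      using n_le_U[of j'] block_rows_le[of j "j' - 1" nG] by (auto simp: c_def m_def uoff_def)
  qed simp
  also have "{0..<dR} = insert 0 {1..<dR}"
    using dR by auto
  finally show ?thesis
    by (simp add: c_def m_def restr_eq_subvec)
qed

lemma wt_w_blocks_le:
  assumes e: "e \<in> carrier_vec N"
  shows "(\<Sum>j\<in>{1..nw}. wt (w_block e j)) \<le> wt e"
proof -
  have "(\<Sum>j\<in>{1..nw}. wt (w_block e j)) = (\<Sum>j\<in>{1..nw}. wt (subvec (W j) rG e))"
    by (intro sum.cong refl) (simp add: w_block_def)
  also have "\<dots> \<le> wt e"
  proof (rule sum_wt_subvec_le)
    fix j assume "j \<in> {1..nw}"
    then show "W j + rG \<le> dim_vec e"
      using e W_add_le_N[of j] by auto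
  next
    fix j j' :: nat assume "j \<in> {1..nw}" "j' \<in> {1..nw}" "j < j'"
    then show "W j + rG \<le> W j'"
      using block_rows_le[of j "j' - 1" rG] by (auto simp: woff_def)
  qed simp
  finally show ?thesis .
qed

lemma wt_reduced_le:
  assumes e: "e \<in> carrier_vec N" and m: "m \<le> dR" and ns: "1 \<le> mat_norm S"
  shows "real (wt (restr n e + transpose_mat S *\<^sub>v u_sum e m)) \<le> mat_norm S * real (wt e)"
proof -
  define \<Sigma> where "\<Sigma> = (\<Sum>j\<in>{1..<dR}. wt (u_block e j))"
  have "wt (u_sum e m) \<le> (\<Sum>j\<in>{1..<m}. wt (u_block e j))"
    unfolding u_sum_def by (rule wt_vec_sum_le) auto
  also have "\<dots> \<le> \<Sigma>"
    unfolding \<Sigma>_def using m by (intro sum_mono2) auto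
  finally have "mat_norm S * real (wt (u_sum e m)) \<le> mat_norm S * real \<Sigma>"
    using ns by (intro mult_left_mono) auto
  moreover have "real (wt (transpose_mat S *\<^sub>v u_sum e m)) \<le> mat_norm S * real (wt (u_sum e m))"
    by (rule wt_mult_le_mat_norm[OF S]) simp
  moreover have "wt (restr n e + transpose_mat S *\<^sub>v u_sum e m) \<le> wt (restr n e) + wt (transpose_mat S *\<^sub>v u_sum e m)"
    by (rule wt_add_le) simp
  moreover have "real (wt (restr n e)) \<le> mat_norm S * real (wt (restr n e))"
    using ns by (simp add: mult_le_cancel_right1)
  moreover have "real (wt (restr n e)) + real \<Sigma> \<le> real (wt e)"
    using wt_u_blocks_le[OF e] unfolding \<Sigma>_def by linarith
  then have "mat_norm S * (real (wt (restr n e)) + real \<Sigma>) \<le> mat_norm S * real (wt e)"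
    using ns by (intro mult_left_mono) auto
  ultimately show ?thesis
    by (simp add: distrib_left)
qed

lemma ker_HXd_reduction:
  assumes e: "e \<in> ker HXd" and J: "J \<in> carrier_mat k n" and \<gamma>: "\<gamma> \<in> carrier_mat k rG"
    and gam: "nw = dR \<Longrightarrow> J * transpose_mat S = \<gamma> * HG" and ns: "1 \<le> mat_norm S"
  shows "(\<exists>e0 \<in> ker HX. J *\<^sub>v e0 = JXd J \<gamma> *\<^sub>v e \<and> real (wt e0) \<le> mat_norm S * real (wt e)) \<or>
    nw = dR \<and> dR \<le> wt e"
proof (cases "\<exists>m \<in> {1..dR}. w_block e m = 0\<^sub>v rG \<and> (m = dR \<or> J * transpose_mat S = \<gamma> * HG)")
  case True
  then obtain m where "1 \<le> m" "m \<le> dR" "w_block e m = 0\<^sub>v rG" "m = dR \<or> J * transpose_mat S = \<gamma> * HG"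
    by auto
  then show ?thesis
    using ker_HXd_reduced[OF e] JXd_mult_vec_reduced[OF e J \<gamma>] wt_reduced_le[OF ker_HXd_carrier[OF e] _ ns]
    by blast
next
  case False
  then have "w_block e dR \<noteq> 0\<^sub>v rG"
    using dR by auto
  then have nw_dR: "nw = dR"
    using nw by (auto simp: w_block_def split: if_splits)
  with False gam have "w_block e j \<noteq> 0\<^sub>v rG" if "j \<in> {1..nw}" for j
    using that by auto
  then have "(\<Sum>j\<in>{1..nw}. 1) \<le> (\<Sum>j\<in>{1..nw}. wt (w_block e j))"
    by (intro sum_mono wt_pos[of _ rG]) auto
  also have "\<dots> \<le> wt e"
    by (rule wt_w_blocks_le[OF ker_HXd_carrier[OF e]])
  finally show ?thesis
    using nw_dR by simp
qed

lemma ker_HZd_reduction: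
  assumes e: "e \<in> ker HZd" and J: "J \<in> carrier_mat k n"
  shows "restr n e \<in> ker HZ \<and> J *\<^sub>v restr n e = JZd J *\<^sub>v e \<and> wt (restr n e) \<le> wt e"
proof (intro conjI)
  have "HZ *\<^sub>v restr n e = 0\<^sub>v rZ"
  proof (rule eq_vecI)
    fix i assume "i < dim_vec (0\<^sub>v rZ :: bit vec)"
    then have "i < rZ"
      by simp
    moreover have "(HZd *\<^sub>v e) $ i = 0"
      using e \<open>i < rZ\<close> by (intro ker_mult_vec_index) (simp_all add: HZd_def dim_row_place)
    ultimately show "(HZ *\<^sub>v restr n e) $ i = 0\<^sub>v rZ $ i"
      using HZd_mult_vec_top[OF ker_HZd_carrier[OF e]] by simp
  qed simp
  then show "restr n e \<in> ker HZ"
    by (simp add: ker_def)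
  show "J *\<^sub>v restr n e = JZd J *\<^sub>v e"
    by (rule JZd_mult_vec[OF J ker_HZd_carrier[OF e], symmetric])
  show "wt (restr n e) \<le> wt e"
    using wt_u_blocks_le[OF ker_HZd_carrier[OF e]] by simp
qed

definition glue_rep :: "bit vec \<Rightarrow> bit vec" where
  "glue_rep v = 0\<^sub>v rZ @\<^sub>v vec (nw * nG) (\<lambda>t. v $ (t mod nG))"

lemma glue_rep_carrier: "glue_rep v \<in> carrier_vec (rZ + nw * nG)"
  by (simp add: glue_rep_def)

lemma subvec_glue_rep:
  assumes v: "v \<in> carrier_vec nG" and i: "1 \<le> i" "i \<le> nw"
  shows "subvec (rZ + (i - 1) * nG) nG (glue_rep v) = v"
proof (rule eq_vecI)
  fix t assume "t < dim_vec v"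
  then have t: "t < nG"
    using v by simp
  then have "(i - 1) * nG + t < nw * nG"
    using block_rows_le[OF i, of nG] by linarith
  then show "subvec (rZ + (i - 1) * nG) nG (glue_rep v) $ t = v $ t"
    using t by (simp add: glue_rep_def add.assoc)
qed (use v in simp)

text \<open>The sum over the glue row blocks of \<open>H\<^sub>Z\<close>: consecutive identity blocks cancel in pairs.\<close>

lemma glue_chain_sum:
  fixes s0 :: bit and g :: "nat \<Rightarrow> bit"
  shows "(\<Sum>i\<in>{1..<nw + 1}. (if i = 1 then s0 else 0) + (if 2 \<le> i then g (i - 1) else 0) +
      (if i \<le> dR - 1 then g i else 0)) = s0 + (if nw = dR then 0 else g nw)"
proof -
  have "(\<Sum>i\<in>{1..<nw + 1}. (if i = 1 then s0 else 0) + (if 2 \<le> i then g (i - 1) else 0) +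
      (if i \<le> dR - 1 then g i else 0)) = (\<Sum>i\<in>{1..<nw + 1}. if i = 1 then s0 else 0) +
      (\<Sum>i\<in>{1..<nw + 1}. if 2 \<le> i then g (i - 1) else 0) +
      (\<Sum>i\<in>{1..<nw + 1}. if i \<le> dR - 1 then g i else 0)"
    by (simp only: sum.distrib)
  also have "(\<Sum>i\<in>{1..<nw + 1}. if i = 1 then s0 else 0) = s0"
    using nw_pos by simp
  also have "(\<Sum>i\<in>{1..<nw + 1}. if 2 \<le> i then g (i - 1) else 0) = (\<Sum>i\<in>{1..<nw}. g i)"
    by (rule sum_shift_if_ge_2)
  also have "(\<Sum>i\<in>{1..<nw + 1}. if i \<le> dR - 1 then g i else 0) =
      (\<Sum>i\<in>{1..<nw}. g i) + (if nw = dR then 0 else g nw)"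
  proof (cases "nw = dR")
    case True
    then have "(\<Sum>i\<in>{1..<nw + 1}. if i \<le> dR - 1 then g i else 0) = (\<Sum>i\<in>{1..<nw}. g i)"
      using dR by (intro sum.mono_neutral_cong_right) auto
    then show ?thesis
      using True by simp
  next
    case False
    then have "(\<Sum>i\<in>{1..<nw + 1}. if i \<le> dR - 1 then g i else 0) = (\<Sum>i\<in>{1..<nw + 1}. g i)"
      using nw by (intro sum.cong) auto
    also have "\<dots> = (\<Sum>i\<in>{1..<nw}. g i) + g nw"
      using nw_pos by simp
    finally show ?thesis
      using False by simp
  qed
  finally show ?thesis
    by (metis add.assoc add_0_left bit_add_self)
qed

lemma HZd_transpose_glue_rep:
  assumes v: "v \<in> carrier_vec nG" and Hv: "HG *\<^sub>v v = 0\<^sub>v rG" and j: "j < N"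
    and ob: "nw = dR \<or> \<not> (U (dR - 1) \<le> j \<and> j < U (dR - 1) + nG)"
  shows "(transpose_mat HZd *\<^sub>v glue_rep v) $ j = ext0 N (transpose_mat S *\<^sub>v v) $ j"
proof -
  let ?c = "glue_rep v"
  define s0 where "s0 = (if j < n then (transpose_mat S *\<^sub>v v) $ j else 0)"
  define g where "g i = (if U i \<le> j \<and> j < U i + nG then v $ (j - U i) else 0)" for i
  have head: "block_contrib j ?c (transpose_block (0, 0, HZ)) = 0"
  proof -
    have "subvec 0 rZ ?c = 0\<^sub>v rZ"
      by (intro eq_vecI) (simp_all add: glue_rep_def)
    moreover have "transpose_mat HZ \<in> carrier_mat n rZ"
      using HZ by simp
    ultimately show ?thesis
      by (simp add: transpose_block_def block_contrib_def mult_mat_vec_zero)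
  qed
  have row_block: "(\<Sum>b\<leftarrow>(if i = 1 then [(rZ + (i - 1) * nG, 0, S)] else []) @
      (if 2 \<le> i then [(rZ + (i - 1) * nG, U (i - 1), 1\<^sub>m nG)] else []) @
      (if i \<le> dR - 1 then [(rZ + (i - 1) * nG, U i, 1\<^sub>m nG)] else []) @
      [(rZ + (i - 1) * nG, W i, transpose_mat HG)]. block_contrib j ?c (transpose_block b)) =
      (if i = 1 then s0 else 0) + (if 2 \<le> i then g (i - 1) else 0) + (if i \<le> dR - 1 then g i else 0)"
    if i: "i \<in> {1..<nw + 1}" for i
  proof -
    let ?r0 = "rZ + (i - 1) * nG"
    have sv: "subvec ?r0 nG ?c = v"
      using i by (intro subvec_glue_rep[OF v]) auto
    have bS: "block_contrib j ?c (transpose_block (?r0, 0, S)) = s0"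
      using sv by (simp add: transpose_block_def block_contrib_def s0_def)
    have bI: "block_contrib j ?c (transpose_block (?r0, U k, 1\<^sub>m nG)) = g k" for k
      using sv v by (simp add: transpose_block_def block_contrib_def g_def)
    have bH: "block_contrib j ?c (transpose_block (?r0, W i, transpose_mat HG)) = 0"
      using sv Hv by (auto simp: transpose_block_def block_contrib_def)
    show ?thesis
      unfolding map_append sum_list_append sum_list_map_if_single list.map sum_list.Cons
        sum_list.Nil bS bI bH
      by (simp only: add_0_right add.assoc)
  qed
  have "(transpose_mat HZd *\<^sub>v ?c) $ j = (\<Sum>i\<in>{1..<nw + 1}.
      (if i = 1 then s0 else 0) + (if 2 \<le> i then g (i - 1) else 0) + (if i \<le> dR - 1 then g i else 0))"
    using index_transpose_place_mult_vec[OF blocks_fit_HZd glue_rep_carrier j] head row_block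
    by (simp add: HZd_def HZ_blocks_def sum_list_concat_map_upt)
  also have "\<dots> = s0 + (if nw = dR then 0 else g nw)"
    by (rule glue_chain_sum)
  also have "(if nw = dR then 0 else g nw) = 0"
  proof (cases "nw = dR")
    case False
    then have "nw = dR - 1"
      using nw by simp
    then show ?thesis
      using ob False by (auto simp: g_def)
  qed simp
  finally show ?thesis
    using j by (simp add: s0_def ext0_def)
qed

lemma ker_HG_glue_rs_HZd:
  assumes v: "v \<in> ker HG"
  shows "\<exists>g \<in> rs HZd. \<forall>j < N. nw = dR \<or> \<not> (U (dR - 1) \<le> j \<and> j < U (dR - 1) + nG) \<longrightarrow>
    g $ j = ext0 N (transpose_mat S *\<^sub>v v) $ j"
proof -
  have "v \<in> carrier_vec nG" and "HG *\<^sub>v v = 0\<^sub>v rG"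
    using v by (auto simp: ker_def)
  moreover have "transpose_mat HZd *\<^sub>v glue_rep v \<in> rs HZd"
    by (rule rs_mem) (simp add: HZd_def dim_row_place glue_rep_carrier)
  ultimately show ?thesis
    using HZd_transpose_glue_rep by blast
qed

lemma restr_rs_HXd: "{restr n h | h. h \<in> rs HXd} = rs HX"
proof
  show "{restr n h | h. h \<in> rs HXd} \<subseteq> rs HX"
  proof clarify
    fix h assume "h \<in> rs HXd"
    then obtain c where c: "c \<in> carrier_vec (rX + (dR - 1) * rG)" and h: "h = transpose_mat HXd *\<^sub>v c"
      by (auto simp: rs_def HXd_def dim_row_place)
    show "restr n h \<in> rs HX"
      unfolding h restr_HXd_transpose[OF c] by (rule rs_mem) simp
  qed
  show "rs HX \<subseteq> {restr n h | h. h \<in> rs HXd}"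
  proof
    fix x assume "x \<in> rs HX"
    then obtain a where a: "a \<in> carrier_vec rX" and x: "x = transpose_mat HX *\<^sub>v a"
      by (auto simp: rs_def)
    let ?c = "a @\<^sub>v 0\<^sub>v ((dR - 1) * rG)"
    have "subvec 0 rX ?c = a"
      using a by (intro eq_vecI) auto
    then have "restr n (transpose_mat HXd *\<^sub>v ?c) = x"
      using a restr_HXd_transpose[of ?c] x by simp
    moreover have "transpose_mat HXd *\<^sub>v ?c \<in> rs HXd"
      using a by (intro rs_mem) (simp add: HXd_def dim_row_place)
    ultimately show "x \<in> {restr n h | h. h \<in> rs HXd}"
      by blast
  qed
qed

lemma ext0_rs_HZd:
  assumes "h \<in> rs HZ"
  shows "ext0 N h \<in> rs HZd"
proof -
  obtain a where a: "a \<in> carrier_vec rZ" and h: "h = transpose_mat HZ *\<^sub>v a"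
    using assms by (auto simp: rs_def)
  have "transpose_mat HZd *\<^sub>v (a @\<^sub>v 0\<^sub>v (nw * nG)) \<in> rs HZd"
    using a by (intro rs_mem) (simp add: HZd_def dim_row_place)
  then show ?thesis
    unfolding h HZd_transpose_top[OF a] .
qed

lemma restr_rs_JXd:
  assumes x: "x \<in> rs J" and J: "J \<in> carrier_mat k n" and \<gamma>: "\<gamma> \<in> carrier_mat k rG"
  shows "\<exists>x' \<in> rs (JXd J \<gamma>). restr n x' = x"
proof -
  obtain b where b: "b \<in> carrier_vec k" and "x = transpose_mat J *\<^sub>v b"
    using x J by (auto simp: rs_def)
  then have "restr n (transpose_mat (JXd J \<gamma>) *\<^sub>v b) = x"
    using restr_JXd_transpose[OF J \<gamma> b] by simp
  moreover have "transpose_mat (JXd J \<gamma>) *\<^sub>v b \<in> rs (JXd J \<gamma>)"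
    using b J by (intro rs_mem) (simp add: JXd_def dim_row_place)
  ultimately show ?thesis
    by blast
qed

lemma ext0_rs_JZd:
  assumes z: "z \<in> rs J" and J: "J \<in> carrier_mat k n"
  shows "ext0 N z \<in> rs (JZd J)"
proof -
  obtain b where b: "b \<in> carrier_vec k" and z: "z = transpose_mat J *\<^sub>v b"
    using assms by (auto simp: rs_def)
  have "transpose_mat (JZd J) *\<^sub>v b \<in> rs (JZd J)"
    using b J by (intro rs_mem) (simp add: JZd_def dim_row_place)
  then show ?thesis
    unfolding z JZd_transpose[OF J b] .
qed

lemma cdist_HXd_ge:
  assumes J: "J \<in> carrier_mat k n" and \<gamma>: "\<gamma> \<in> carrier_mat k rG"
    and gam: "nw = dR \<Longrightarrow> J * transpose_mat S = \<gamma> * HG" and ns: "1 \<le> mat_norm S"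
    and transfer: "\<And>x. x \<in> carrier_vec n \<Longrightarrow> J *\<^sub>v x \<noteq> 0\<^sub>v k \<Longrightarrow> J0 *\<^sub>v x \<noteq> 0\<^sub>v (dim_row J0)"
  shows "min (ereal_of_enat (cdist HX J0) / ereal (mat_norm S)) (if nw = dR then ereal (real dR) else \<infinity>)
    \<le> ereal_of_enat (cdist HXd (JXd J \<gamma>))"
proof (rule cdist_ge_by_reduction)
  fix e assume e: "e \<in> ker HXd" and nz: "JXd J \<gamma> *\<^sub>v e \<noteq> 0\<^sub>v (dim_row (JXd J \<gamma>))"
  have "(\<exists>e0 \<in> ker HX. J *\<^sub>v e0 = JXd J \<gamma> *\<^sub>v e \<and> real (wt e0) \<le> mat_norm S * real (wt e)) \<or>
      nw = dR \<and> dR \<le> wt e"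
    using ker_HXd_reduction[of e J k \<gamma>] e J \<gamma> gam ns by blast
  then show "(\<exists>e0 \<in> ker HX. J0 *\<^sub>v e0 \<noteq> 0\<^sub>v (dim_row J0) \<and> real (wt e0) \<le> mat_norm S * real (wt e)) \<or>
      (if nw = dR then ereal (real dR) else \<infinity>) \<le> ereal (real (wt e))"
  proof (elim disjE bexE conjE)
    fix e0 assume e0: "e0 \<in> ker HX" and eq: "J *\<^sub>v e0 = JXd J \<gamma> *\<^sub>v e"
      and w: "real (wt e0) \<le> mat_norm S * real (wt e)"
    have "J *\<^sub>v e0 \<noteq> 0\<^sub>v k"
      using eq nz J by (simp add: JXd_def dim_row_place)
    then have "J0 *\<^sub>v e0 \<noteq> 0\<^sub>v (dim_row J0)"
      using transfer ker_carrier[OF e0] by simp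
    then show ?thesis
      using e0 w by blast
  qed simp
qed (use ns in simp)

lemma cdist_HZd_ge:
  assumes J: "J \<in> carrier_mat k n" and ns: "1 \<le> mat_norm S"
    and transfer: "\<And>x. x \<in> carrier_vec n \<Longrightarrow> J *\<^sub>v x \<noteq> 0\<^sub>v k \<Longrightarrow> J0 *\<^sub>v x \<noteq> 0\<^sub>v (dim_row J0)"
  shows "ereal_of_enat (cdist HZ J0) / ereal (mat_norm S) \<le> ereal_of_enat (cdist HZd (JZd J))"
proof -
  have "min (ereal_of_enat (cdist HZ J0) / ereal (mat_norm S)) \<infinity> \<le> ereal_of_enat (cdist HZd (JZd J))"
  proof (rule cdist_ge_by_reduction)
    fix e assume e: "e \<in> ker HZd" and nz: "JZd J *\<^sub>v e \<noteq> 0\<^sub>v (dim_row (JZd J))"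
    have "real (wt (restr n e)) \<le> mat_norm S * real (wt e)"
      using ker_HZd_reduction[OF e J] ns mult_right_mono[OF ns, of "real (wt e)"] by auto
    moreover have "J *\<^sub>v restr n e \<noteq> 0\<^sub>v k"
      using ker_HZd_reduction[OF e J] nz J by (simp add: JZd_def dim_row_place)
    ultimately show "(\<exists>e0 \<in> ker HZ. J0 *\<^sub>v e0 \<noteq> 0\<^sub>v (dim_row J0) \<and> real (wt e0) \<le> mat_norm S * real (wt e)) \<or>
        \<infinity> \<le> ereal (real (wt e))"
      using ker_HZd_reduction[OF e J] transfer[of "restr n e"] by (intro disjI1 bexI[of _ "restr n e"]) auto
  qed (use ns in simp)
  then show ?thesis
    by simp
qed

end

locale sticker_deformation = sticker_code + logical_split
begin

lemma glue_ext0_rs_HZd: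
  assumes coarse: "rs JZA \<subseteq> set_mult (ker HG) S" and z: "z \<in> rs JZA"
  obtains g where "g \<in> rs HZd"
    and "\<And>j. j < N \<Longrightarrow> nw = dR \<or> \<not> (U (dR - 1) \<le> j \<and> j < U (dR - 1) + nG) \<Longrightarrow> g $ j = ext0 N z $ j"
proof -
  obtain v where "v \<in> ker HG" and "z = transpose_mat S *\<^sub>v v"
    using coarse z by (auto simp: set_mult_def)
  then show ?thesis
    using ker_HG_glue_rs_HZd that by blast
qed

lemma measurement_sticker:
  assumes nw_dR: "nw = dR" and \<gamma>: "\<gamma> \<in> carrier_mat (k - q) rG"
    and gam: "JXC * transpose_mat S = \<gamma> * HG"
    and coarse: "rs JZA \<subseteq> set_mult (ker HG) S" and ns: "1 \<le> mat_norm S"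
  shows "{restr n h | h. h \<in> rs (HX_MM dR HX HG T)} = rs HX
    \<and> (\<forall>h \<in> rs HZ. ext0 (NMM n nG rG dR) h \<in> rs (HZ_MM dR HZ HG S))
    \<and> (\<forall>x \<in> rs JX. JZA *\<^sub>v x = 0\<^sub>v q \<longrightarrow> (\<exists>x' \<in> rs (JX_MM dR JXC HG S \<gamma>). restr n x' = x))
    \<and> (\<forall>z \<in> rs JZ. ext0 (NMM n nG rG dR) z \<in> set_plus (rs (JZ_MM dR JZC HG)) (rs (HZ_MM dR HZ HG S)))
    \<and> (\<forall>z \<in> rs JZA. ext0 (NMM n nG rG dR) z \<in> rs (HZ_MM dR HZ HG S))
    \<and> min (ereal_of_enat (min (cdist HX JX) (cdist HZ JZ)) / ereal (mat_norm S)) (ereal (real dR))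
        \<le> ereal_of_enat (min (cdist (HX_MM dR HX HG T) (JX_MM dR JXC HG S \<gamma>))
            (cdist (HZ_MM dR HZ HG S) (JZ_MM dR JZC HG)))"
proof -
  have eqs: "HX_MM dR HX HG T = HXd" "HZ_MM dR HZ HG S = HZd" "JX_MM dR JXC HG S \<gamma> = JXd JXC \<gamma>"
    "JZ_MM dR JZC HG = JZd JZC" "NMM n nG rG dR = N"
    using HX_MM_eq[OF nw_dR] HZ_MM_eq[OF nw_dR] JX_MM_eq[OF nw_dR JXC] JZ_MM_eq[OF nw_dR JZC]
    by (simp_all add: NMM_def nw_dR)
  have glue: "ext0 N z \<in> rs HZd" if z: "z \<in> rs JZA" for z
  proof -
    obtain g where g: "g \<in> rs HZd"
      and gz: "\<And>j. j < N \<Longrightarrow> nw = dR \<or> \<not> (U (dR - 1) \<le> j \<and> j < U (dR - 1) + nG) \<Longrightarrow>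
        g $ j = ext0 N z $ j"
      using glue_ext0_rs_HZd[OF coarse z] by blast
    have "g = ext0 N z"
      using gz nw_dR rs_carrier[OF HZd_carrier g] by (intro eq_vecI) (auto simp: ext0_def)
    then show ?thesis
      using g by simp
  qed
  have logical_X: "\<exists>x' \<in> rs (JXd JXC \<gamma>). restr n x' = x" if "x \<in> rs JX" "JZA *\<^sub>v x = 0\<^sub>v q" for x
    using rs_append_rows_dual[OF JXA JXC JZA JZC split_dual] that rs_JX_split
    by (intro restr_rs_JXd[OF _ JXC \<gamma>]) auto
  have logical_Z: "ext0 N z \<in> set_plus (rs (JZd JZC)) (rs HZd)" if zJ: "z \<in> rs JZ" for z
  proof -
    have "z \<in> set_plus (rs JZA) (rs JZC)"
      using zJ rs_JZ_split rs_append_rows[OF JZA JZC] by simp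
    then obtain a c where a: "a \<in> rs JZA" and c: "c \<in> rs JZC" and z: "z = a + c"
      unfolding set_plus_def by blast
    have "ext0 N z = ext0 N c + ext0 N a"
      using rs_carrier[OF JZA a] rs_carrier[OF JZC c] by (intro eq_vecI) (auto simp: z ext0_def)
    then show ?thesis
      using ext0_rs_JZd[OF c JZC] glue[OF a] by (auto simp: set_plus_def)
  qed
  have dist_X: "min (ereal_of_enat (cdist HX JX) / ereal (mat_norm S)) (ereal (real dR))
      \<le> ereal_of_enat (cdist HXd (JXd JXC \<gamma>))"
    using cdist_HXd_ge[OF JXC \<gamma> gam ns JX_neq_0_of_JXC] nw_dR by simp
  have dist_Z: "ereal_of_enat (cdist HZ JZ) / ereal (mat_norm S) \<le> ereal_of_enat (cdist HZd (JZd JZC))"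
    by (rule cdist_HZd_ge[OF JZC ns JZ_neq_0_of_JZC])
  have "min (ereal_of_enat (min (cdist HX JX) (cdist HZ JZ)) / ereal (mat_norm S)) (ereal (real dR))
      \<le> min (ereal_of_enat (cdist HXd (JXd JXC \<gamma>))) (ereal_of_enat (cdist HZd (JZd JZC)))"
    using min_div_le_min[OF dist_X dist_Z] ns by (simp add: ereal_of_enat_min)
  then show ?thesis
    unfolding eqs ereal_of_enat_min
    using restr_rs_HXd ext0_rs_HZd logical_X logical_Z glue by (intro conjI) auto
qed

lemma branch_sticker:
  assumes nw_dR: "nw = dR - 1" and coarse: "rs JZA \<subseteq> set_mult (ker HG) S" and ns: "1 \<le> mat_norm S"
  shows "{restr n h | h. h \<in> rs (HX_MB dR HX HG T)} = rs HX
    \<and> (\<forall>h \<in> rs HZ. ext0 (NMB n nG rG dR) h \<in> rs (HZ_MB dR HZ HG S))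
    \<and> (\<forall>x \<in> rs JX. \<exists>x' \<in> rs (JX_MB dR (JXA @\<^sub>r JXC) HG S). restr n x' = x)
    \<and> (\<forall>z \<in> rs JZ. ext0 (NMB n nG rG dR) z \<in> rs (JZ_MB dR (JZA @\<^sub>r JZC) HG))
    \<and> (\<forall>z \<in> rs JZA. \<exists>g \<in> rs (HZ_MB dR HZ HG S). \<forall>i < NMB n nG rG dR.
          \<not> (uoff n nG (dR - 1) \<le> i \<and> i < uoff n nG (dR - 1) + nG) \<longrightarrow> (ext0 (NMB n nG rG dR) z + g) $ i = 0)
    \<and> ereal_of_enat (min (cdist HX JX) (cdist HZ JZ)) / ereal (mat_norm S)
        \<le> ereal_of_enat (min (cdist (HX_MB dR HX HG T) (JX_MB dR (JXA @\<^sub>r JXC) HG S))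
            (cdist (HZ_MB dR HZ HG S) (JZ_MB dR (JZA @\<^sub>r JZC) HG)))"
proof -
  \<comment> \<open>without a block \<open>w\<^bsub>d\<^sub>R\<^esub>\<close>, \<^const>\<open>JXd\<close> ignores its second argument\<close>
  let ?\<gamma> = "0\<^sub>m k rG :: bit mat"
  have nw_ne: "nw \<noteq> dR"
    using nw_dR dR by simp
  have eqs: "HX_MB dR HX HG T = HXd" "HZ_MB dR HZ HG S = HZd"
    "JX_MB dR (JXA @\<^sub>r JXC) HG S = JXd (JXA @\<^sub>r JXC) ?\<gamma>"
    "JZ_MB dR (JZA @\<^sub>r JZC) HG = JZd (JZA @\<^sub>r JZC)" "NMB n nG rG dR = N"
    using HX_MB_eq[OF nw_dR] HZ_MB_eq[OF nw_dR] JX_MB_eq[OF nw_dR JX_split_carrier]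
      JZ_MB_eq[OF nw_dR JZ_split_carrier] by (simp_all add: NMB_def nw_dR)
  have glue: "\<exists>g \<in> rs HZd. \<forall>i < N. \<not> (U (dR - 1) \<le> i \<and> i < U (dR - 1) + nG) \<longrightarrow> (ext0 N z + g) $ i = 0"
    if z: "z \<in> rs JZA" for z
  proof -
    obtain g where g: "g \<in> rs HZd"
      and gz: "\<And>j. j < N \<Longrightarrow> nw = dR \<or> \<not> (U (dR - 1) \<le> j \<and> j < U (dR - 1) + nG) \<Longrightarrow>
        g $ j = ext0 N z $ j"
      using glue_ext0_rs_HZd[OF coarse z] by blast
    have "(ext0 N z + g) $ i = 0" if "i < N" "\<not> (U (dR - 1) \<le> i \<and> i < U (dR - 1) + nG)" for i
      using gz[OF that(1) disjI2[OF that(2)]] rs_carrier[OF HZd_carrier g] that(1) by simp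
    then show ?thesis
      using g by blast
  qed
  have dist_X: "ereal_of_enat (cdist HX JX) / ereal (mat_norm S)
      \<le> ereal_of_enat (cdist HXd (JXd (JXA @\<^sub>r JXC) ?\<gamma>))"
    using cdist_HXd_ge[OF JX_split_carrier _ _ ns JX_neq_0_of_split, of ?\<gamma>] nw_ne by simp
  have dist_Z: "ereal_of_enat (cdist HZ JZ) / ereal (mat_norm S)
      \<le> ereal_of_enat (cdist HZd (JZd (JZA @\<^sub>r JZC)))"
    by (rule cdist_HZd_ge[OF JZ_split_carrier ns JZ_neq_0_of_split])
  have "ereal_of_enat (min (cdist HX JX) (cdist HZ JZ)) / ereal (mat_norm S)
      \<le> min (ereal_of_enat (cdist HXd (JXd (JXA @\<^sub>r JXC) ?\<gamma>))) (ereal_of_enat (cdist HZd (JZd (JZA @\<^sub>r JZC))))"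
    using min_div_le_min[of _ _ \<infinity>, OF _ dist_Z] dist_X ns by (simp add: ereal_of_enat_min)
  moreover have "\<exists>x' \<in> rs (JXd (JXA @\<^sub>r JXC) ?\<gamma>). restr n x' = x" if "x \<in> rs JX" for x
    using that rs_JX_split by (intro restr_rs_JXd[OF _ JX_split_carrier]) auto
  moreover have "ext0 N z \<in> rs (JZd (JZA @\<^sub>r JZC))" if "z \<in> rs JZ" for z
    using that rs_JZ_split by (intro ext0_rs_JZd[OF _ JZ_split_carrier]) auto
  ultimately show ?thesis
    unfolding eqs ereal_of_enat_min
    using restr_rs_HXd ext0_rs_HZd glue by (intro conjI) auto
qed

end

theorem theorem2:
  fixes HX HZ JX JZ FX FZ :: "bit mat"
    and Jbar Jinv JZA JZC JXA JXC :: "bit mat"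
    and HG S T :: "bit mat"
    and n rX rZ k kg q nG rG dR :: nat
  assumes HX: "HX \<in> carrier_mat rX n" and HZ: "HZ \<in> carrier_mat rZ n"
    and JX: "JX \<in> carrier_mat k n" and JZ: "JZ \<in> carrier_mat k n"
    and FX: "FX \<in> carrier_mat kg n" and FZ: "FZ \<in> carrier_mat kg n"
    and kerHX: "dsum3 (ker HX) (rs HZ) (rs JZ) (rs FZ)"
    and kerHZ: "dsum3 (ker HZ) (rs HX) (rs JX) (rs FX)"
    and JXJZ: "JX * transpose_mat JZ = 1\<^sub>m k"
    and FXFZ: "FX * transpose_mat FZ = 1\<^sub>m kg"
    and q: "q \<le> k"
    and JZA: "JZA \<in> carrier_mat q n" and JZC: "JZC \<in> carrier_mat (k - q) n"
    and Jbar: "Jbar \<in> carrier_mat k k" and Jinv: "Jinv \<in> carrier_mat k k"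
    and Jbar_inv: "Jbar * Jinv = 1\<^sub>m k" "Jinv * Jbar = 1\<^sub>m k"
    and JZ': "JZA @\<^sub>r JZC = Jbar * JZ"
    and JXA: "JXA \<in> carrier_mat q n" and JXC: "JXC \<in> carrier_mat (k - q) n"
    and JX': "JXA @\<^sub>r JXC = transpose_mat Jinv * JX"
    and HG: "HG \<in> carrier_mat rG nG"
    and S: "S \<in> carrier_mat nG n" and T: "T \<in> carrier_mat rX rG"
    and S_nz: "S \<noteq> 0\<^sub>m nG n"
    and compat: "HX * transpose_mat S = T * HG"
    and dR: "dR \<ge> 2"
  shows
   "(\<forall>\<gamma> U m.
      (U \<in> carrier_mat m n \<and> (\<forall>i < m. row U i \<in> set_plus (rs HZ) (rs FZ)) \<and>
       rs (JZA @\<^sub>r U) = set_mult (ker HG) S \<and>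
       \<gamma> \<in> carrier_mat (k - q) rG \<and> JXC * transpose_mat S = \<gamma> * HG) \<longrightarrow>
      (let N = NMM n nG rG dR;
           HXd = HX_MM dR HX HG T; HZd = HZ_MM dR HZ HG S;
           JXd = JX_MM dR JXC HG S \<gamma>; JZd = JZ_MM dR JZC HG
       in {restr n h | h. h \<in> rs HXd} = rs HX
        \<and> (\<forall>h \<in> rs HZ. ext0 N h \<in> rs HZd)
        \<and> (\<forall>x \<in> rs JX. JZA *\<^sub>v x = 0\<^sub>v q \<longrightarrow> (\<exists>x' \<in> rs JXd. restr n x' = x))
        \<and> (\<forall>z \<in> rs JZ. ext0 N z \<in> set_plus (rs JZd) (rs HZd))
        \<and> (\<forall>z \<in> rs JZA. ext0 N z \<in> rs HZd)
        \<and> min (ereal_of_enat (min (cdist HX JX) (cdist HZ JZ)) / ereal (mat_norm S))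
              (ereal (real dR))
            \<le> ereal_of_enat (min (cdist HXd JXd) (cdist HZd JZd))))
  \<and> (rs JZA \<subseteq> set_mult (ker HG) S \<longrightarrow>
      (let N = NMB n nG rG dR;
           HXd = HX_MB dR HX HG T; HZd = HZ_MB dR HZ HG S;
           JXd = JX_MB dR (JXA @\<^sub>r JXC) HG S; JZd = JZ_MB dR (JZA @\<^sub>r JZC) HG;
           ob = uoff n nG (dR - 1)
       in {restr n h | h. h \<in> rs HXd} = rs HX
        \<and> (\<forall>h \<in> rs HZ. ext0 N h \<in> rs HZd)
        \<and> (\<forall>x \<in> rs JX. \<exists>x' \<in> rs JXd. restr n x' = x)
        \<and> (\<forall>z \<in> rs JZ. ext0 N z \<in> rs JZd)
        \<and> (\<forall>z \<in> rs JZA. \<exists>g \<in> rs HZd.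
              \<forall>i < N. \<not> (ob \<le> i \<and> i < ob + nG) \<longrightarrow> (ext0 N z + g) $ i = 0)
        \<and> ereal_of_enat (min (cdist HX JX) (cdist HZ JZ)) / ereal (mat_norm S)
            \<le> ereal_of_enat (min (cdist HXd JXd) (cdist HZd JZd))))"
  proof -
  interpret MM: sticker_deformation HX HZ HG S T n rX rZ nG rG dR dR
    JX JZ Jbar Jinv JXA JXC JZA JZC k q
    using assms by unfold_locales auto
  interpret MB: sticker_deformation HX HZ HG S T n rX rZ nG rG dR "dR - 1"
    JX JZ Jbar Jinv JXA JXC JZA JZC k q
    using assms by unfold_locales auto
  have ns: "1 \<le> mat_norm S"
    by (rule mat_norm_ge_1[OF S S_nz])
  have coarse: "rs JZA \<subseteq> set_mult (ker HG) S"
    if "U \<in> carrier_mat m n" and "rs (JZA @\<^sub>r U) = set_mult (ker HG) S" for U m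
    using rs_append_rows_subset[OF JZA that(1)] that(2) by simp
  show ?thesis
    unfolding Let_def
  proof (rule conjI, goal_cases measurement branch)
    case measurement
    show ?case
      by (intro allI impI, elim conjE) (rule MM.measurement_sticker[OF refl _ _ coarse ns]; assumption)
  next
    case branch
    show ?case
      by (intro impI) (rule MB.branch_sticker[OF refl _ ns])
  qed
qed

end
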